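(* Let $\omega>0$, $B>0$, $\lambda\le0$, and let $V:\mathbb{R}\to[0,\infty)$ be smooth with bounded derivative and $\mathrm{supp}\,V\subset[-s_0,s_0]$ for some $s_0>0$. Let $H(A)$ be the closure in $L^2(\mathbb{R}^2)$ of the operator $(i\partial_x-By)^2-\partial_y^2+\omega^2y^2+\lambda y^2V(xy)$ defined on $C_0^\infty(\mathbb{R}^2)$ (which is essentially self-adjoint there). Then $\sigma_{\mathrm{ess}}(H(A))\supset[\sqrt{\omega^2+B^2},\infty)$.
   Context: $H(A)$ is the operator $(i\nabla+A)^2+\omega^2y^2+\lambda y^2V(xy)$ with $A=(-By,0)$ the vector potential of a homogeneous magnetic field of intensity $B$. *)

theory Defs
  imports "HOL-Analysis.Analysis"
begin

type_synonym fn2 = "real \<times> real \<Rightarrow> complex"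

definition dx :: "fn2 \<Rightarrow> fn2" where
  "dx f = (\<lambda>(x,y). vector_derivative (\<lambda>t. f (t,y)) (at x))"

definition dy :: "fn2 \<Rightarrow> fn2" where
  "dy f = (\<lambda>(x,y). vector_derivative (\<lambda>t. f (x,t)) (at y))"

definition smooth2 :: "fn2 \<Rightarrow> bool" where
  "smooth2 f \<longleftrightarrow> (\<forall>ws::bool list.
     let g = fold (\<lambda>b h. if b then dx h else dy h) ws f in
       continuous_on UNIV g \<and>
       (\<forall>x y. (\<lambda>t. g (t,y)) differentiable (at x) \<and> (\<lambda>t. g (x,t)) differentiable (at y)))"

definition test_fn :: "fn2 \<Rightarrow> bool" where
  "test_fn f \<longleftrightarrow> smooth2 f \<and> compact (closure {z. f z \<noteq> 0})"

text \<open>The magnetic derivative i d/dx - B y (vector potential A = (-By,0)).\<close>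
definition Dmag :: "real \<Rightarrow> fn2 \<Rightarrow> fn2" where
  "Dmag B f = (\<lambda>(x,y). \<i> * dx f (x,y) - complex_of_real (B * y) * f (x,y))"

definition Hop :: "real \<Rightarrow> real \<Rightarrow> real \<Rightarrow> (real \<Rightarrow> real) \<Rightarrow> fn2 \<Rightarrow> fn2" where
  "Hop B w lam V f = (\<lambda>(x,y). Dmag B (Dmag B f) (x,y) - dy (dy f) (x,y)
        + complex_of_real (w^2 * y^2 + lam * y^2 * V (x*y)) * f (x,y))"

text \<open>L^2(R^2), elements represented by functions (identified up to a.e. equality).\<close>
definition L2 :: "fn2 set" where
  "L2 = {f. f \<in> borel_measurable lborel \<and> integrable lborel (\<lambda>z. (cmod (f z))^2)}"

definition L2norm :: "fn2 \<Rightarrow> real" where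
  "L2norm f = sqrt (\<integral>z. (cmod (f z))^2 \<partial>lborel)"

text \<open>Graph of the closure in L^2 of an operator T defined on C_0^infinity:
  G f g iff (f,g) lies in the L^2-closure of the graph of T.\<close>
definition closure_graph :: "(fn2 \<Rightarrow> fn2) \<Rightarrow> fn2 \<Rightarrow> fn2 \<Rightarrow> bool" where
  "closure_graph T f g \<longleftrightarrow> f \<in> L2 \<and> g \<in> L2 \<and>
     (\<exists>\<phi>::nat \<Rightarrow> fn2. (\<forall>n. test_fn (\<phi> n)) \<and>
        (\<lambda>n. L2norm (\<lambda>z. \<phi> n z - f z)) \<longlonglongrightarrow> 0 \<and>
        (\<lambda>n. L2norm (\<lambda>z. T (\<phi> n) z - g z)) \<longlonglongrightarrow> 0)"

text \<open>Resolvent set: H - z is a bijection from the domain onto L^2 (mod a.e.) with bounded inverse.\<close>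
definition in_resolvent :: "(fn2 \<Rightarrow> fn2 \<Rightarrow> bool) \<Rightarrow> complex \<Rightarrow> bool" where
  "in_resolvent G z \<longleftrightarrow>
     (\<exists>C. \<forall>h\<in>L2. \<exists>f g. G f g \<and> (AE p in lborel. g p - z * f p = h p) \<and> L2norm f \<le> C * L2norm h) \<and>
     (\<forall>f g. G f g \<and> (AE p in lborel. g p = z * f p) \<longrightarrow> (AE p in lborel. f p = 0))"

definition op_spectrum :: "(fn2 \<Rightarrow> fn2 \<Rightarrow> bool) \<Rightarrow> complex set" where
  "op_spectrum G = {z. \<not> in_resolvent G z}"

definition is_eigenfunction :: "(fn2 \<Rightarrow> fn2 \<Rightarrow> bool) \<Rightarrow> complex \<Rightarrow> fn2 \<Rightarrow> bool" where
  "is_eigenfunction G z f \<longleftrightarrow> (\<exists>g. G f g \<and> (AE p in lborel. g p = z * f p))"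

definition is_eigenvalue :: "(fn2 \<Rightarrow> fn2 \<Rightarrow> bool) \<Rightarrow> complex \<Rightarrow> bool" where
  "is_eigenvalue G z \<longleftrightarrow> (\<exists>f. is_eigenfunction G z f \<and> \<not> (AE p in lborel. f p = 0))"

text \<open>Finite multiplicity: the eigenspace (mod a.e.) has finite dimension.\<close>
definition finite_multiplicity :: "(fn2 \<Rightarrow> fn2 \<Rightarrow> bool) \<Rightarrow> complex \<Rightarrow> bool" where
  "finite_multiplicity G z \<longleftrightarrow> (\<exists>N::nat. \<forall>fs::nat \<Rightarrow> fn2. (\<forall>i\<le>N. is_eigenfunction G z (fs i)) \<longrightarrow>
      (\<exists>c::nat \<Rightarrow> complex. (\<exists>i\<le>N. c i \<noteq> 0) \<and> (AE p in lborel. (\<Sum>i\<le>N. c i * fs i p) = 0)))"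

definition disc_spectrum :: "(fn2 \<Rightarrow> fn2 \<Rightarrow> bool) \<Rightarrow> complex set" where
  "disc_spectrum G = {z \<in> op_spectrum G. (\<exists>e>0. ball z e \<inter> op_spectrum G \<subseteq> {z})
      \<and> is_eigenvalue G z \<and> finite_multiplicity G z}"

definition ess_spectrum :: "(fn2 \<Rightarrow> fn2 \<Rightarrow> bool) \<Rightarrow> complex set" where
  "ess_spectrum G = op_spectrum G - disc_spectrum G"

end

theory Submission
  imports Defs "HOL-Computational_Algebra.Polynomial"
begin

(* For zeta \<ge> nu = sqrt (w^2 + B^2) write zeta = nu + k^2 w^2 / nu^2. For functions
   e^(ikx) f(y) the magnetic operator without potential acts on f as
   -f'' + ((k + By)^2 + w^2 y^2) f = -f'' + nu^2 (y - y0)^2 f + (k^2 w^2 / nu^2) f,  y0 = -kB / nu^2,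
   whose ground state exp (-nu (y - y0)^2 / 2) has energy exactly zeta. Cutting off
   e^(ikx) exp (-nu (y - y0)^2 / 2) smoothly to the box [R, 3R] x [y0 - R, y0 + R] gives test functions
   u_R with ||(H - zeta) u_R|| bounded while ||u_R||^2 grows like R: the cut-off derivatives are O(1/R)
   on a region of area O(R^2), and the potential term is O(1/R^2) because x \<ge> R on the support, so
   |xy| \<le> s0 forces |y| \<le> s0 / R. Hence zeta is not in the resolvent set, and as the whole ray lies in
   the spectrum, none of its points is isolated, so none is in the discrete spectrum. *)

section \<open>Smooth functions of one variable\<close>

(* n-fold differentiability on the whole line, phrased recursively through deriv so that closure
   under sums, products and composition is a plain induction on n. *)
fun smooth_upto :: "nat \<Rightarrow> (real \<Rightarrow> real) \<Rightarrow> bool" where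
  "smooth_upto 0 f = True"
| "smooth_upto (Suc n) f \<longleftrightarrow> (\<forall>x. f differentiable (at x)) \<and> smooth_upto n (deriv f)"

lemma smooth_upto_SucD: "smooth_upto (Suc n) f \<Longrightarrow> smooth_upto n f"
  by (induction n arbitrary: f) auto

lemma has_real_derivative_deriv: "f differentiable (at x) \<Longrightarrow> (f has_real_derivative deriv f x) (at x)"
  using DERIV_deriv_iff_real_differentiable by blast

lemma smooth_upto_funpow_deriv:
  assumes "smooth_upto (Suc n) f"
  shows "((deriv ^^ n) f has_real_derivative (deriv ^^ Suc n) f x) (at x)"
  using assms
proof (induction n arbitrary: f)
  case 0
  then show ?case by (simp add: has_real_derivative_deriv)
next
  case (Suc n)
  then have "((deriv ^^ n) (deriv f) has_real_derivative (deriv ^^ Suc n) (deriv f) x) (at x)"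
    by simp
  then show ?case by (simp only: funpow_Suc_right comp_def)
qed

lemma smooth_upto_const: "smooth_upto n (\<lambda>x. c)"
  by (induction n arbitrary: c) auto

lemma smooth_upto_ident: "smooth_upto n (\<lambda>x. x)"
proof -
  have "deriv (\<lambda>x::real. x) = (\<lambda>x. 1)" by (auto intro!: DERIV_imp_deriv derivative_eq_intros)
  then show ?thesis by (cases n) (auto simp: smooth_upto_const)
qed

lemma smooth_upto_add: "smooth_upto n f \<Longrightarrow> smooth_upto n g \<Longrightarrow> smooth_upto n (\<lambda>x. f x + g x)"
proof (induction n arbitrary: f g)
  case (Suc n)
  have "deriv (\<lambda>x. f x + g x) = (\<lambda>x. deriv f x + deriv g x)"
    using Suc.prems by (auto intro!: DERIV_imp_deriv DERIV_add has_real_derivative_deriv)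
  then show ?case using Suc by auto
qed simp

lemma smooth_upto_mult: "smooth_upto n f \<Longrightarrow> smooth_upto n g \<Longrightarrow> smooth_upto n (\<lambda>x. f x * g x)"
proof (induction n arbitrary: f g)
  case (Suc n)
  have d: "((\<lambda>x. f x * g x) has_real_derivative deriv f x * g x + f x * deriv g x) (at x)" for x
    using Suc.prems DERIV_mult[OF has_real_derivative_deriv has_real_derivative_deriv, of f x g]
    by (simp add: mult.commute)
  then have "deriv (\<lambda>x. f x * g x) = (\<lambda>x. deriv f x * g x + f x * deriv g x)"
    by (auto intro!: DERIV_imp_deriv)
  moreover have "smooth_upto n (\<lambda>x. deriv f x * g x + f x * deriv g x)"
    using Suc by (intro smooth_upto_add Suc.IH) (auto intro: smooth_upto_SucD)
  ultimately show ?case using d by (auto simp: real_differentiable_def)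
qed simp

lemma smooth_upto_uminus: "smooth_upto n f \<Longrightarrow> smooth_upto n (\<lambda>x. - f x)"
  using smooth_upto_mult[OF smooth_upto_const[of n "-1"], of f] by simp

lemma smooth_upto_diff: "smooth_upto n f \<Longrightarrow> smooth_upto n g \<Longrightarrow> smooth_upto n (\<lambda>x. f x - g x)"
  using smooth_upto_add[OF _ smooth_upto_uminus, of n f g] by simp

lemma smooth_upto_exp: "smooth_upto n h \<Longrightarrow> smooth_upto n (\<lambda>x. exp (h x))"
proof (induction n arbitrary: h)
  case (Suc n)
  have d: "((\<lambda>x. exp (h x)) has_real_derivative deriv h x * exp (h x)) (at x)" for x
    using Suc.prems DERIV_fun_exp[OF has_real_derivative_deriv, of h x] by (simp add: mult.commute)
  then have "deriv (\<lambda>x. exp (h x)) = (\<lambda>x. deriv h x * exp (h x))"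
    by (auto intro!: DERIV_imp_deriv)
  moreover have "smooth_upto n (\<lambda>x. deriv h x * exp (h x))"
    using Suc by (intro smooth_upto_mult Suc.IH) (auto intro: smooth_upto_SucD)
  ultimately show ?case using d by (auto simp: real_differentiable_def)
qed simp

lemma smooth_upto_cos_sin:
  "smooth_upto n h \<Longrightarrow> smooth_upto n (\<lambda>x. cos (h x)) \<and> smooth_upto n (\<lambda>x. sin (h x))"
proof (induction n arbitrary: h)
  case (Suc n)
  have dc: "((\<lambda>x. cos (h x)) has_real_derivative - (deriv h x * sin (h x))) (at x)" for x
    using Suc.prems DERIV_fun_cos[OF has_real_derivative_deriv, of h x] by (simp add: mult.commute)
  have ds: "((\<lambda>x. sin (h x)) has_real_derivative deriv h x * cos (h x)) (at x)" for x
    using Suc.prems DERIV_fun_sin[OF has_real_derivative_deriv, of h x] by (simp add: mult.commute)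
  have "deriv (\<lambda>x. cos (h x)) = (\<lambda>x. - (deriv h x * sin (h x)))"
    "deriv (\<lambda>x. sin (h x)) = (\<lambda>x. deriv h x * cos (h x))"
    using dc ds by (auto intro!: DERIV_imp_deriv)
  moreover have "smooth_upto n (\<lambda>x. cos (h x)) \<and> smooth_upto n (\<lambda>x. sin (h x))"
    using Suc.IH[OF smooth_upto_SucD[OF Suc.prems]] .
  moreover have "smooth_upto n (deriv h)" using Suc.prems by simp
  ultimately show ?case using dc ds
    by (auto simp: real_differentiable_def intro!: smooth_upto_mult smooth_upto_uminus)
qed simp

lemma smooth_upto_compose_affine: "smooth_upto n f \<Longrightarrow> smooth_upto n (\<lambda>x. f (a * x + b))"
proof (induction n arbitrary: f)
  case (Suc n)
  have d: "((\<lambda>x. f (a * x + b)) has_real_derivative deriv f (a * x + b) * a) (at x)" for x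
    using Suc.prems
    by (intro DERIV_chain2[OF has_real_derivative_deriv]) (auto intro!: derivative_eq_intros)
  then have "deriv (\<lambda>x. f (a * x + b)) = (\<lambda>x. deriv f (a * x + b) * a)"
    by (auto intro!: DERIV_imp_deriv)
  moreover have "smooth_upto n (\<lambda>x. deriv f (a * x + b) * a)"
    using Suc by (auto intro!: smooth_upto_mult smooth_upto_const)
  ultimately show ?case using d by (auto simp: real_differentiable_def)
qed simp

definition psi :: "real \<Rightarrow> real" where
  "psi s = (if s > 0 then exp (-1/s) else 0)"

fun psi_poly :: "nat \<Rightarrow> real poly" where
  "psi_poly 0 = 1"
| "psi_poly (Suc n) = [:0,0,1:] * (psi_poly n - pderiv (psi_poly n))"

definition psi_deriv :: "nat \<Rightarrow> real \<Rightarrow> real" where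
  "psi_deriv n s = (if s > 0 then poly (psi_poly n) (1/s) * exp (-1/s) else 0)"

lemma tendsto_poly_inverse_exp_at_right_0:
  fixes p :: "real poly"
  shows "((\<lambda>h. poly p (1/h) * exp (-1/h)) \<longlongrightarrow> 0) (at_right 0)"
proof -
  have "(\<lambda>u. poly p u * exp (-u)) = (\<lambda>u. \<Sum>i\<le>degree p. coeff p i * (u ^ i / exp u))"
    by (auto simp: poly_altdef sum_divide_distrib exp_minus field_simps)
  moreover have "((\<lambda>u. \<Sum>i\<le>degree p. coeff p i * (u ^ i / exp u)) \<longlongrightarrow> (\<Sum>i\<le>degree p. coeff p i * 0)) at_top"
    by (intro tendsto_sum tendsto_mult tendsto_const tendsto_power_div_exp_0)
  ultimately have "((\<lambda>u. poly p u * exp (-u)) \<longlongrightarrow> 0) at_top" by simp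
  from filterlim_compose[OF this filterlim_inverse_at_top_right] show ?thesis
    by (simp add: divide_inverse)
qed

lemma psi_deriv_has_derivative: "(psi_deriv n has_real_derivative psi_deriv (Suc n) s) (at s)"
proof -
  consider "s > 0" | "s < 0" | "s = 0" by linarith
  then show ?thesis
  proof cases
    case 1
    have p: "((\<lambda>s. poly (psi_poly n) (1/s)) has_real_derivative poly (pderiv (psi_poly n)) (1/s) * (- 1 / s^2)) (at s)"
      using 1 by (intro DERIV_chain2[OF poly_DERIV]) (auto intro!: derivative_eq_intros simp: power2_eq_square)
    have e: "((\<lambda>s. exp (-1/s)) has_real_derivative exp (-1/s) * (1/s^2)) (at s)"
      using 1 by (intro DERIV_chain2[OF DERIV_exp]) (auto intro!: derivative_eq_intros simp: power2_eq_square)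
    have "poly (pderiv (psi_poly n)) (1/s) * (- 1 / s^2) * exp (-1/s) + exp (-1/s) * (1/s^2) * poly (psi_poly n) (1/s)
        = psi_deriv (Suc n) s"
      using 1 by (simp add: psi_deriv_def algebra_simps power2_eq_square)
    with DERIV_mult[OF p e]
    have "((\<lambda>s. poly (psi_poly n) (1/s) * exp (-1/s)) has_real_derivative psi_deriv (Suc n) s) (at s)"
      by metis
    then show ?thesis
      by (rule has_field_derivative_transform_within_open[where S="{0<..}"])
         (use 1 in \<open>auto simp: psi_deriv_def\<close>)
  next
    case 2
    have "((\<lambda>s. 0) has_real_derivative psi_deriv (Suc n) s) (at s)"
      using 2 by (simp add: psi_deriv_def)
    then show ?thesis
      by (rule has_field_derivative_transform_within_open[where S="{..<0}"])
         (use 2 in \<open>auto simp: psi_deriv_def\<close>)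
  next
    case 3
    have "((\<lambda>h. (psi_deriv n h - psi_deriv n 0) / h) \<longlongrightarrow> 0) (at_right 0)"
      using tendsto_poly_inverse_exp_at_right_0[of "[:0,1:] * psi_poly n"]
      by (rule Lim_transform_within[where d=1]) (auto simp: psi_deriv_def)
    moreover have "((\<lambda>h. (psi_deriv n h - psi_deriv n 0) / h) \<longlongrightarrow> 0) (at_left 0)"
      by (rule Lim_transform_within[OF tendsto_const, where d=1]) (auto simp: psi_deriv_def)
    ultimately have "(psi_deriv n has_real_derivative 0) (at 0)"
      by (simp add: has_field_derivative_iff filterlim_at_split)
    then show ?thesis using 3 by (simp add: psi_deriv_def)
  qed
qed

lemma smooth_upto_psi: "smooth_upto n psi"
proof -
  have "smooth_upto n (psi_deriv m)" for m
  proof (induction n arbitrary: m)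
    case (Suc n)
    have "deriv (psi_deriv m) = psi_deriv (Suc m)"
      by (auto intro!: DERIV_imp_deriv psi_deriv_has_derivative)
    then show ?case
      using Suc psi_deriv_has_derivative real_differentiable_def by auto
  qed simp
  moreover have "psi_deriv 0 = psi" by (auto simp: psi_def psi_deriv_def)
  ultimately show ?thesis by metis
qed

lemma psi_nonneg: "0 \<le> psi s" and psi_le_one: "psi s \<le> 1"
  by (auto simp: psi_def)

definition bump :: "real \<Rightarrow> real" where
  "bump t = psi (1 + t) * psi (1 - t)"

definition bump' :: "real \<Rightarrow> real" where
  "bump' = deriv bump"

definition bump'' :: "real \<Rightarrow> real" where
  "bump'' = deriv bump'"

lemma smooth_upto_bump: "smooth_upto n bump"
proof -
  have "smooth_upto n (\<lambda>t. psi (1 * t + 1) * psi ((-1) * t + 1))"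
    by (intro smooth_upto_mult smooth_upto_compose_affine smooth_upto_psi)
  then show ?thesis unfolding bump_def by (simp add: algebra_simps)
qed

lemma bump_nonneg: "0 \<le> bump t" and bump_le_one: "bump t \<le> 1"
  using psi_nonneg[of "1+t"] psi_le_one[of "1+t"] psi_nonneg[of "1-t"] psi_le_one[of "1-t"]
  unfolding bump_def by (auto intro: mult_le_one)

lemma bump_eq_0: "1 \<le> \<bar>t\<bar> \<Longrightarrow> bump t = 0"
  by (auto simp: bump_def psi_def)

lemma bump_ge: "\<bar>t\<bar> \<le> 1/2 \<Longrightarrow> exp (-4) \<le> bump t"
proof -
  assume t: "\<bar>t\<bar> \<le> 1/2"
  have "exp (-2) \<le> psi (1 + t)" "exp (-2) \<le> psi (1 - t)"
    using t by (auto simp: psi_def field_simps)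
  then have "exp (-2) * exp (-2) \<le> psi (1 + t) * psi (1 - t)"
    by (intro mult_mono) (auto intro: psi_nonneg)
  then show ?thesis by (simp add: bump_def mult_exp_exp)
qed

lemma bump_has_derivative: "(bump has_real_derivative bump' t) (at t)"
  using smooth_upto_funpow_deriv[OF smooth_upto_bump, of 0] by (simp add: bump'_def)

lemma bump'_has_derivative: "(bump' has_real_derivative bump'' t) (at t)"
  using smooth_upto_funpow_deriv[OF smooth_upto_bump, of 1] by (simp add: bump'_def bump''_def)

lemma isCont_bump'': "isCont bump'' t"
  using smooth_upto_funpow_deriv[OF smooth_upto_bump, of 2, THEN DERIV_isCont]
  by (simp add: bump'_def bump''_def numeral_2_eq_2)

lemma derivative_eq_0_outside_unit_interval:
  assumes "\<And>t. 1 < \<bar>t\<bar> \<Longrightarrow> f t = 0" and "(f has_real_derivative D) (at t)" and "1 < \<bar>t\<bar>"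
  shows "D = 0"
proof -
  have "((\<lambda>t. 0) has_real_derivative 0) (at t)" by simp
  then have "(f has_real_derivative 0) (at t)"
    by (rule has_field_derivative_transform_within_open[where S="{t. 1 < \<bar>t\<bar>}"])
       (use assms in \<open>auto intro!: open_Collect_less continuous_intros\<close>)
  then show ?thesis using assms(2) DERIV_unique by blast
qed

lemma bump'_eq_0: "1 < \<bar>t\<bar> \<Longrightarrow> bump' t = 0"
  using derivative_eq_0_outside_unit_interval[OF _ bump_has_derivative] bump_eq_0 by auto

lemma bump''_eq_0: "1 < \<bar>t\<bar> \<Longrightarrow> bump'' t = 0"
  using derivative_eq_0_outside_unit_interval[OF _ bump'_has_derivative] bump'_eq_0 by auto

lemma bounded_if_continuous_vanishing_outside_interval:
  fixes f :: "real \<Rightarrow> real"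
  assumes "\<And>t. isCont f t" and "\<And>t. r < \<bar>t\<bar> \<Longrightarrow> f t = 0"
  shows "\<exists>K. \<forall>t. \<bar>f t\<bar> \<le> K"
proof -
  have "compact (f ` {-r..r})"
    using assms(1) by (intro compact_continuous_image continuous_at_imp_continuous_on) auto
  then obtain K where K: "\<forall>t\<in>{-r..r}. \<bar>f t\<bar> \<le> K"
    by (auto dest!: compact_imp_bounded simp: bounded_real)
  have "\<bar>f t\<bar> \<le> max K 0" for t
  proof (cases "r < \<bar>t\<bar>")
    case False
    then have "t \<in> {-r..r}" by (auto simp: abs_le_iff)
    then show ?thesis using K by fastforce
  qed (simp add: assms(2))
  then show ?thesis by blast
qed

lemma bump_derivatives_bounded: "\<exists>K. \<forall>t. \<bar>bump' t\<bar> \<le> K \<and> \<bar>bump'' t\<bar> \<le> K"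
proof -
  obtain K1 where "\<forall>t. \<bar>bump' t\<bar> \<le> K1"
    using bounded_if_continuous_vanishing_outside_interval[of bump' 1]
      bump'_eq_0 bump'_has_derivative[THEN DERIV_isCont] by blast
  moreover obtain K2 where "\<forall>t. \<bar>bump'' t\<bar> \<le> K2"
    using bounded_if_continuous_vanishing_outside_interval[of bump'' 1] bump''_eq_0 isCont_bump''
    by blast
  ultimately have "\<forall>t. \<bar>bump' t\<bar> \<le> max K1 K2 \<and> \<bar>bump'' t\<bar> \<le> max K1 K2"
    by (auto intro: le_max_iff_disj[THEN iffD2])
  then show ?thesis by blast
qed

definition cutoff :: "real \<Rightarrow> real \<Rightarrow> real \<Rightarrow> real" where
  "cutoff c L x = bump ((x - c) / L)"

definition cutoff' :: "real \<Rightarrow> real \<Rightarrow> real \<Rightarrow> real" where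
  "cutoff' c L x = bump' ((x - c) / L) / L"

definition cutoff'' :: "real \<Rightarrow> real \<Rightarrow> real \<Rightarrow> real" where
  "cutoff'' c L x = bump'' ((x - c) / L) / L^2"

lemma cutoff_has_derivative: "L \<noteq> 0 \<Longrightarrow> (cutoff c L has_real_derivative cutoff' c L x) (at x)"
  unfolding cutoff_def[abs_def] cutoff'_def
  by (rule DERIV_chain2[OF bump_has_derivative, THEN DERIV_cong]) (auto intro!: derivative_eq_intros)

lemma cutoff'_has_derivative: "L \<noteq> 0 \<Longrightarrow> (cutoff' c L has_real_derivative cutoff'' c L x) (at x)"
  unfolding cutoff'_def[abs_def] cutoff''_def
  by (rule DERIV_cdivide[OF DERIV_chain2[OF bump'_has_derivative], THEN DERIV_cong])
     (auto intro!: derivative_eq_intros simp: power2_eq_square)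

lemma smooth_upto_cutoff: "smooth_upto n (cutoff c L)"
proof -
  have "smooth_upto n (\<lambda>x. bump ((1/L) * x + (- c/L)))"
    by (intro smooth_upto_compose_affine smooth_upto_bump)
  then show ?thesis unfolding cutoff_def[abs_def] by (simp add: diff_divide_distrib)
qed

lemma cutoff_nonneg: "0 \<le> cutoff c L x" and cutoff_le_one: "cutoff c L x \<le> 1"
  by (simp_all add: cutoff_def bump_nonneg bump_le_one)

lemma cutoff_eq_0: "L > 0 \<Longrightarrow> L \<le> \<bar>x - c\<bar> \<Longrightarrow> cutoff c L x = 0"
  unfolding cutoff_def by (rule bump_eq_0) (simp add: abs_divide le_divide_eq)

lemma cutoff'_eq_0: "L > 0 \<Longrightarrow> L < \<bar>x - c\<bar> \<Longrightarrow> cutoff' c L x = 0"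
  unfolding cutoff'_def by (simp add: bump'_eq_0 abs_divide less_divide_eq)

lemma cutoff''_eq_0: "L > 0 \<Longrightarrow> L < \<bar>x - c\<bar> \<Longrightarrow> cutoff'' c L x = 0"
  unfolding cutoff''_def by (simp add: bump''_eq_0 abs_divide less_divide_eq)

lemma cutoff_ge: "L > 0 \<Longrightarrow> \<bar>x - c\<bar> \<le> L/2 \<Longrightarrow> exp (-4) \<le> cutoff c L x"
  unfolding cutoff_def by (rule bump_ge) (simp add: abs_divide divide_le_eq)

lemma abs_cutoff'_le: "(\<And>t. \<bar>bump' t\<bar> \<le> K) \<Longrightarrow> L > 0 \<Longrightarrow> \<bar>cutoff' c L x\<bar> \<le> K / L"
  by (simp add: cutoff'_def abs_divide divide_right_mono)

lemma abs_cutoff''_le: "(\<And>t. \<bar>bump'' t\<bar> \<le> K) \<Longrightarrow> L > 0 \<Longrightarrow> \<bar>cutoff'' c L x\<bar> \<le> K / L^2"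
  by (simp add: cutoff''_def abs_divide divide_right_mono)

lemma continuous_on_bump: "continuous_on UNIV bump"
  and continuous_on_bump': "continuous_on UNIV bump'"
  and continuous_on_bump'': "continuous_on UNIV bump''"
  using bump_has_derivative[THEN DERIV_isCont] bump'_has_derivative[THEN DERIV_isCont] isCont_bump''
  by (auto intro!: continuous_at_imp_continuous_on)

lemma continuous_on_cutoff [continuous_intros]:
  "continuous_on S f \<Longrightarrow> continuous_on S (\<lambda>x. cutoff c L (f x))"
  unfolding cutoff_def divide_inverse
  by (rule continuous_on_compose2[OF continuous_on_bump _ subset_UNIV]) (intro continuous_intros)

lemma continuous_on_cutoff' [continuous_intros]:
  "continuous_on S f \<Longrightarrow> continuous_on S (\<lambda>x. cutoff' c L (f x))"
  unfolding cutoff'_def divide_inverse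
  by (intro continuous_intros continuous_on_compose2[OF continuous_on_bump' _ subset_UNIV])

lemma continuous_on_cutoff'' [continuous_intros]:
  "continuous_on S f \<Longrightarrow> continuous_on S (\<lambda>x. cutoff'' c L (f x))"
  unfolding cutoff''_def divide_inverse
  by (intro continuous_intros continuous_on_compose2[OF continuous_on_bump'' _ subset_UNIV])

definition gauss :: "real \<Rightarrow> real \<Rightarrow> real \<Rightarrow> real" where
  "gauss nu y0 y = exp (-(nu/2) * (y - y0)^2)"

definition gauss' :: "real \<Rightarrow> real \<Rightarrow> real \<Rightarrow> real" where
  "gauss' nu y0 y = -nu * (y - y0) * gauss nu y0 y"

definition gauss'' :: "real \<Rightarrow> real \<Rightarrow> real \<Rightarrow> real" where
  "gauss'' nu y0 y = (nu^2 * (y - y0)^2 - nu) * gauss nu y0 y"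

lemma gauss_has_derivative: "(gauss nu y0 has_real_derivative gauss' nu y0 y) (at y)"
  unfolding gauss_def[abs_def] gauss'_def
  by (auto intro!: derivative_eq_intros simp: power2_eq_square algebra_simps)

lemma gauss'_has_derivative: "(gauss' nu y0 has_real_derivative gauss'' nu y0 y) (at y)"
  unfolding gauss'_def[abs_def] gauss''_def
  by (rule DERIV_mult[OF _ gauss_has_derivative, THEN DERIV_cong])
     (auto intro!: derivative_eq_intros simp: gauss'_def power2_eq_square algebra_simps)

lemma smooth_upto_gauss: "smooth_upto n (gauss nu y0)"
proof -
  have "smooth_upto n (\<lambda>y. exp ((-(nu/2)) * ((y - y0) * (y - y0))))"
    by (intro smooth_upto_exp smooth_upto_mult smooth_upto_const smooth_upto_diff smooth_upto_ident)
  then show ?thesis unfolding gauss_def[abs_def] by (simp add: power2_eq_square)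
qed

lemma gauss_pos: "0 < gauss nu y0 y" and gauss_le_one: "0 \<le> nu \<Longrightarrow> gauss nu y0 y \<le> 1"
  by (auto simp: gauss_def)

lemma gauss_ge: "0 \<le> nu \<Longrightarrow> \<bar>y - y0\<bar> \<le> 1/2 \<Longrightarrow> exp (-(nu/8)) \<le> gauss nu y0 y"
proof -
  assume nu: "0 \<le> nu" and y: "\<bar>y - y0\<bar> \<le> 1/2"
  have "(y - y0)^2 \<le> (1/2)^2" using y by (metis abs_ge_zero power2_abs power_mono)
  then have "(nu/2) * (y - y0)^2 \<le> (nu/2) * (1/2)^2" using nu by (intro mult_left_mono) auto
  then show ?thesis unfolding gauss_def by (simp add: power2_eq_square)
qed

lemma abs_mult_exp_neg_square_le:
  fixes a t :: real
  assumes a: "a > 0"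
  shows "\<bar>t\<bar> * exp (-(a * t^2)) \<le> 1 + 1/a"
proof -
  have "\<bar>t\<bar> \<le> (1 + 1/a) * (1 + a * t^2)"
  proof (cases "\<bar>t\<bar> \<le> 1")
    case True
    moreover have "1 \<le> (1 + 1/a) * (1 + a * t^2)"
      using a by (intro order_trans[OF _ mult_mono[of 1 "1 + 1/a" 1 "1 + a*t^2"]]) auto
    ultimately show ?thesis by linarith
  next
    case False
    then have "\<bar>t\<bar> * 1 \<le> \<bar>t\<bar> * \<bar>t\<bar>" by (intro mult_left_mono) auto
    then have "\<bar>t\<bar> \<le> (1/a) * (a * t^2)"
      using a by (simp add: power2_eq_square)
    also have "\<dots> \<le> (1 + 1/a) * (1 + a * t^2)"
      using a by (intro mult_mono) auto
    finally show ?thesis .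
  qed
  also have "\<dots> \<le> (1 + 1/a) * exp (a * t^2)"
    using a exp_ge_add_one_self[of "a * t^2"] by (intro mult_left_mono) auto
  finally show ?thesis
    using a by (simp add: exp_minus field_simps)
qed

lemma abs_mult_gauss_le: "nu > 0 \<Longrightarrow> \<bar>y - y0\<bar> * gauss nu y0 y \<le> 1 + 2/nu"
  using abs_mult_exp_neg_square_le[of "nu/2" "y - y0"] by (simp add: gauss_def)

lemma abs_gauss'_le: "nu > 0 \<Longrightarrow> \<bar>gauss' nu y0 y\<bar> \<le> nu + 2"
proof -
  assume nu: "nu > 0"
  have "\<bar>gauss' nu y0 y\<bar> = nu * (\<bar>y - y0\<bar> * gauss nu y0 y)"
    using nu gauss_pos[of nu y0 y] by (simp add: gauss'_def abs_mult)
  also have "\<dots> \<le> nu * (1 + 2/nu)"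
    using abs_mult_gauss_le[OF nu] nu by (intro mult_left_mono) auto
  also have "\<dots> = nu + 2" using nu by (simp add: field_simps)
  finally show ?thesis .
qed

lemma continuous_on_gauss [continuous_intros]:
  "continuous_on S f \<Longrightarrow> continuous_on S (\<lambda>x. gauss nu y0 (f x))"
  and continuous_on_gauss' [continuous_intros]:
  "continuous_on S f \<Longrightarrow> continuous_on S (\<lambda>x. gauss' nu y0 (f x))"
  unfolding gauss_def gauss'_def by (auto intro!: continuous_intros)

section \<open>Partial derivatives and test functions on the plane\<close>

abbreviation partial_step :: "bool \<Rightarrow> fn2 \<Rightarrow> fn2" where
  "partial_step \<equiv> (\<lambda>b h. if b then dx h else dy h)"

lemma dx_diff:
  assumes "\<And>x y. (\<lambda>t. f (t,y)) differentiable (at x)" and "\<And>x y. (\<lambda>t. g (t,y)) differentiable (at x)"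
  shows "dx (\<lambda>z. f z - g z) = (\<lambda>z. dx f z - dx g z)"
proof
  fix z :: "real \<times> real"
  obtain x y where z: "z = (x,y)" by force
  have "((\<lambda>t. f (t,y) - g (t,y)) has_vector_derivative
      vector_derivative (\<lambda>t. f (t,y)) (at x) - vector_derivative (\<lambda>t. g (t,y)) (at x)) (at x)"
    using assms by (intro has_vector_derivative_diff vector_derivative_works[THEN iffD1])
  then show "dx (\<lambda>z. f z - g z) z = dx f z - dx g z"
    unfolding z dx_def by (simp add: vector_derivative_at)
qed

lemma dy_diff:
  assumes "\<And>x y. (\<lambda>t. f (x,t)) differentiable (at y)" and "\<And>x y. (\<lambda>t. g (x,t)) differentiable (at y)"
  shows "dy (\<lambda>z. f z - g z) = (\<lambda>z. dy f z - dy g z)"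
proof
  fix z :: "real \<times> real"
  obtain x y where z: "z = (x,y)" by force
  have "((\<lambda>t. f (x,t) - g (x,t)) has_vector_derivative
      vector_derivative (\<lambda>t. f (x,t)) (at y) - vector_derivative (\<lambda>t. g (x,t)) (at y)) (at y)"
    using assms by (intro has_vector_derivative_diff vector_derivative_works[THEN iffD1])
  then show "dy (\<lambda>z. f z - g z) z = dy f z - dy g z"
    unfolding z dy_def by (simp add: vector_derivative_at)
qed

lemma dx_product:
  assumes "\<And>x. (a has_vector_derivative a' x) (at x)"
  shows "dx (\<lambda>(x,y). a x * b y) = (\<lambda>(x,y). a' x * b y)"
proof
  fix z :: "real \<times> real"
  obtain x y where z: "z = (x,y)" by force
  have "((\<lambda>t. a t * b y) has_vector_derivative a' x * b y) (at x)"
    by (intro has_vector_derivative_mult_left assms)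
  then show "dx (\<lambda>(x,y). a x * b y) z = (\<lambda>(x,y). a' x * b y) z"
    unfolding z dx_def by (simp add: vector_derivative_at)
qed

lemma dy_product:
  assumes "\<And>y. (b has_vector_derivative b' y) (at y)"
  shows "dy (\<lambda>(x,y). a x * b y) = (\<lambda>(x,y). a x * b' y)"
proof
  fix z :: "real \<times> real"
  obtain x y where z: "z = (x,y)" by force
  have "((\<lambda>t. a x * b t) has_vector_derivative a x * b' y) (at y)"
    by (intro has_vector_derivative_mult_right assms)
  then show "dy (\<lambda>(x,y). a x * b y) z = (\<lambda>(x,y). a x * b' y) z"
    unfolding z dy_def by (simp add: vector_derivative_at)
qed

lemma smooth2_fold_partial_step:
  assumes "smooth2 f"
  shows "smooth2 (fold partial_step ws f)"
  unfolding smooth2_def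
proof
  fix ws'
  have "fold partial_step ws' (fold partial_step ws f) = fold partial_step (ws @ ws') f" by simp
  then show "let g = fold partial_step ws' (fold partial_step ws f) in continuous_on UNIV g \<and>
      (\<forall>x y. (\<lambda>t. g (t, y)) differentiable at x \<and> (\<lambda>t. g (x, t)) differentiable at y)"
    using assms unfolding smooth2_def by metis
qed

lemma smooth2_partial_step: "smooth2 f \<Longrightarrow> smooth2 (partial_step b f)"
  using smooth2_fold_partial_step[of f "[b]"] by simp

lemma smooth2D:
  assumes "smooth2 f"
  shows "continuous_on UNIV f" and "\<And>x y. (\<lambda>t. f (t,y)) differentiable (at x)"
    and "\<And>x y. (\<lambda>t. f (x,t)) differentiable (at y)"
  using assms unfolding smooth2_def by (auto dest!: spec[of _ "[]"])

lemma fold_partial_step_diff: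
  "smooth2 f \<Longrightarrow> smooth2 g \<Longrightarrow>
    fold partial_step ws (\<lambda>z. f z - g z) = (\<lambda>z. fold partial_step ws f z - fold partial_step ws g z)"
proof (induction ws arbitrary: f g)
  case (Cons b ws)
  have "partial_step b (\<lambda>z. f z - g z) = (\<lambda>z. partial_step b f z - partial_step b g z)"
    using smooth2D[OF Cons.prems(1)] smooth2D[OF Cons.prems(2)] by (auto intro!: dx_diff dy_diff)
  then show ?case
    using Cons.IH[OF smooth2_partial_step[OF Cons.prems(1)] smooth2_partial_step[OF Cons.prems(2)]]
    by simp
qed simp

lemma smooth2_diff:
  assumes f: "smooth2 f" and g: "smooth2 g"
  shows "smooth2 (\<lambda>z. f z - g z)"
  unfolding smooth2_def Let_def fold_partial_step_diff[OF f g]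
  using smooth2D[OF smooth2_fold_partial_step[OF f]] smooth2D[OF smooth2_fold_partial_step[OF g]]
  by (auto intro!: continuous_on_diff differentiable_diff)

lemma test_fn_diff:
  assumes "test_fn f" and "test_fn g"
  shows "test_fn (\<lambda>z. f z - g z)"
proof -
  have "bounded ({z. f z \<noteq> 0} \<union> {z. g z \<noteq> 0})"
    using assms unfolding test_fn_def by auto
  then have "bounded {z. f z - g z \<noteq> 0}"
    by (rule bounded_subset) auto
  then show ?thesis using assms smooth2_diff unfolding test_fn_def by auto
qed

lemma smooth2_if_closed_family:
  assumes "f \<in> Fs" and "\<And>g. g \<in> Fs \<Longrightarrow> dx g \<in> Fs \<and> dy g \<in> Fs"
    and "\<And>g. g \<in> Fs \<Longrightarrow> continuous_on UNIV g \<and>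
           (\<forall>x y. (\<lambda>t. g (t,y)) differentiable (at x) \<and> (\<lambda>t. g (x,t)) differentiable (at y))"
  shows "smooth2 f"
proof -
  have "fold partial_step ws g \<in> Fs" if "g \<in> Fs" for ws g
    using that by (induction ws arbitrary: g) (auto dest: assms(2))
  then show ?thesis using assms(1,3) unfolding smooth2_def Let_def by blast
qed

lemma smooth2_product_of_derivative_sequences:
  fixes a b :: "nat \<Rightarrow> real \<Rightarrow> complex"
  assumes da: "\<And>n x. (a n has_vector_derivative a (Suc n) x) (at x)"
    and db: "\<And>n y. (b n has_vector_derivative b (Suc n) y) (at y)"
  shows "smooth2 (\<lambda>(x,y). a 0 x * b 0 y)"
proof -
  define F where "F p q = (\<lambda>(x,y). a p x * b q y)" for p q
  have "dx (F p q) = F (Suc p) q" "dy (F p q) = F p (Suc q)" for p q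
    unfolding F_def by (auto simp: dx_product[OF da] dy_product[OF db])
  moreover have ca: "continuous_on UNIV (a p)" and cb: "continuous_on UNIV (b p)" for p
    using da db by (auto intro!: continuous_at_imp_continuous_on has_vector_derivative_continuous)
  then have "continuous_on UNIV (F p q)" for p q
    unfolding F_def split_beta
    by (intro continuous_intros continuous_on_compose2[OF ca] continuous_on_compose2[OF cb]) auto
  moreover have "(\<lambda>t. F p q (t, y)) differentiable at x \<and> (\<lambda>t. F p q (x, t)) differentiable at y"
    for p q x y
    unfolding F_def using da db
    by (auto intro!: differentiableI_vector has_vector_derivative_mult_left has_vector_derivative_mult_right)
  ultimately have "smooth2 (F 0 0)"
    by (intro smooth2_if_closed_family[of _ "{F p q | p q. True}"]) blast+
  then show ?thesis by (simp add: F_def)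
qed

lemma smooth2_product:
  assumes "\<And>n. smooth_upto n f" and "\<And>n. smooth_upto n g" and "\<And>n. smooth_upto n h"
  shows "smooth2 (\<lambda>(x,y). (complex_of_real (f x) + \<i> * complex_of_real (g x)) * complex_of_real (h y))"
proof -
  have "((\<lambda>x. complex_of_real ((deriv ^^ n) f x) + \<i> * complex_of_real ((deriv ^^ n) g x))
      has_vector_derivative
      complex_of_real ((deriv ^^ Suc n) f x) + \<i> * complex_of_real ((deriv ^^ Suc n) g x)) (at x)" for n x
    by (intro has_vector_derivative_add has_vector_derivative_mult_right has_vector_derivative_of_real
        smooth_upto_funpow_deriv assms)
  moreover have "((\<lambda>y. complex_of_real ((deriv ^^ n) h y)) has_vector_derivative
      complex_of_real ((deriv ^^ Suc n) h y)) (at y)" for n y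
    by (intro has_vector_derivative_of_real smooth_upto_funpow_deriv assms)
  ultimately show ?thesis
    using smooth2_product_of_derivative_sequences[where
        a = "\<lambda>n x. complex_of_real ((deriv ^^ n) f x) + \<i> * complex_of_real ((deriv ^^ n) g x)"
        and b = "\<lambda>n y. complex_of_real ((deriv ^^ n) h y)"]
    by (simp only: funpow_0)
qed

lemma Dmag_diff:
  assumes "\<And>x y. (\<lambda>t. f (t,y)) differentiable (at x)" and "\<And>x y. (\<lambda>t. g (t,y)) differentiable (at x)"
  shows "Dmag B (\<lambda>z. f z - g z) = (\<lambda>z. Dmag B f z - Dmag B g z)"
  unfolding Dmag_def dx_diff[OF assms] by (auto simp: algebra_simps)

lemma Dmag_differentiable:
  assumes "smooth2 f"
  shows "(\<lambda>t. Dmag B f (t,y)) differentiable (at x)"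
  using smooth2D(2)[OF smooth2_partial_step[OF assms, of True]] smooth2D(2)[OF assms]
  unfolding Dmag_def by (auto intro!: differentiable_diff differentiable_mult)

lemma Hop_diff:
  assumes "test_fn f" and "test_fn g"
  shows "Hop B w lam V (\<lambda>z. f z - g z) = (\<lambda>z. Hop B w lam V f z - Hop B w lam V g z)"
proof -
  have f: "smooth2 f" and g: "smooth2 g" using assms test_fn_def by auto
  have "Dmag B (Dmag B (\<lambda>z. f z - g z)) = (\<lambda>z. Dmag B (Dmag B f) z - Dmag B (Dmag B g) z)"
    unfolding Dmag_diff[OF smooth2D(2)[OF f] smooth2D(2)[OF g]]
    by (rule Dmag_diff[OF Dmag_differentiable[OF f] Dmag_differentiable[OF g]])
  moreover have "dy (dy (\<lambda>z. f z - g z)) = (\<lambda>z. dy (dy f) z - dy (dy g) z)"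
    using smooth2D(3)[OF f] smooth2D(3)[OF g]
      smooth2D(3)[OF smooth2_partial_step[OF f, of False]] smooth2D(3)[OF smooth2_partial_step[OF g, of False]]
    by (simp add: dy_diff)
  ultimately show ?thesis
    unfolding Hop_def by (auto simp: algebra_simps)
qed

lemma Hop_product:
  assumes da: "\<And>x. (a has_vector_derivative a' x) (at x)" and da': "\<And>x. (a' has_vector_derivative a'' x) (at x)"
    and db: "\<And>y. (b has_vector_derivative b' y) (at y)" and db': "\<And>y. (b' has_vector_derivative b'' y) (at y)"
  shows "Hop B w lam V (\<lambda>(x,y). a x * b y) (x,y) =
    (- a'' x - 2 * \<i> * complex_of_real (B*y) * a' x + complex_of_real ((B*y)^2) * a x) * b y - a x * b'' y
    + complex_of_real (w^2 * y^2 + lam * y^2 * V (x*y)) * (a x * b y)"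
proof -
  let ?u = "\<lambda>(x,y). a x * b y"
  have Dmag: "Dmag B ?u = (\<lambda>(x,y). (\<i> * a' x - complex_of_real (B*y) * a x) * b y)"
    unfolding Dmag_def dx_product[OF da] by (auto simp: algebra_simps)
  have "((\<lambda>t. (\<i> * a' t - complex_of_real (B*y) * a t) * b y) has_vector_derivative
      (\<i> * a'' x - complex_of_real (B*y) * a' x) * b y) (at x)"
    by (intro has_vector_derivative_mult_left has_vector_derivative_diff
        has_vector_derivative_mult_right da da')
  then have dxDmag: "dx (Dmag B ?u) (x,y) = (\<i> * a'' x - complex_of_real (B*y) * a' x) * b y"
    unfolding Dmag dx_def by (simp add: vector_derivative_at)
  have dyy: "dy (dy ?u) (x,y) = a x * b'' y"
    unfolding dy_product[OF db] dy_product[OF db'] by simp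
  have "Hop B w lam V ?u (x,y) = \<i> * dx (Dmag B ?u) (x,y) - complex_of_real (B*y) * Dmag B ?u (x,y)
      - dy (dy ?u) (x,y) + complex_of_real (w^2 * y^2 + lam * y^2 * V (x*y)) * ?u (x,y)"
    by (simp add: Hop_def Dmag_def[of B "Dmag B ?u"])
  also have "\<dots> = (- a'' x - 2 * \<i> * complex_of_real (B*y) * a' x + complex_of_real ((B*y)^2) * a x) * b y
      - a x * b'' y + complex_of_real (w^2 * y^2 + lam * y^2 * V (x*y)) * (a x * b y)"
    unfolding dxDmag dyy unfolding Dmag by (simp add: algebra_simps power2_eq_square)
  finally show ?thesis .
qed

section \<open>Square-integrable functions and the Weyl criterion\<close>

lemma norm_diff_square_le: "(cmod (a - b))^2 \<le> 2 * (cmod a)^2 + 2 * (cmod b)^2"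
proof -
  have "(cmod (a - b))^2 \<le> (cmod a + cmod b)^2"
    using norm_triangle_ineq4[of a b] by (intro power_mono) auto
  also have "\<dots> \<le> 2 * (cmod a)^2 + 2 * (cmod b)^2"
    using sum_squares_ge_zero[of "cmod a - cmod b" 0] by (simp add: power2_eq_square algebra_simps)
  finally show ?thesis .
qed

lemma L2_diff:
  assumes "f \<in> L2" and "g \<in> L2"
  shows "(\<lambda>z. f z - g z) \<in> L2"
proof -
  have m: "(\<lambda>z. f z - g z) \<in> borel_measurable lborel" using assms by (auto simp: L2_def)
  have "integrable lborel (\<lambda>z. 2 * (cmod (f z))^2 + 2 * (cmod (g z))^2)"
    using assms by (auto simp: L2_def)
  then have "integrable lborel (\<lambda>z. (cmod (f z - g z))^2)"
    by (rule Bochner_Integration.integrable_bound)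
       (use m norm_diff_square_le in \<open>auto intro!: AE_I2 borel_measurable_power\<close>)
  then show ?thesis using m by (simp add: L2_def)
qed

lemma L2_cmult:
  assumes "f \<in> L2"
  shows "(\<lambda>z. c * f z) \<in> L2"
  using assms integrable_mult_right[of "(cmod c)^2" lborel "\<lambda>z. (cmod (f z))^2"]
  by (auto simp: L2_def norm_mult power_mult_distrib)

lemma L2norm_cong_AE:
  assumes "f \<in> L2" and "g \<in> L2" and "AE z in lborel. f z = g z"
  shows "L2norm f = L2norm g"
proof -
  have "(\<integral>z. (cmod (f z))^2 \<partial>lborel) = (\<integral>z. (cmod (g z))^2 \<partial>lborel)"
    using assms by (intro integral_cong_AE) (auto simp: L2_def elim!: AE_mp)
  then show ?thesis by (simp add: L2norm_def)
qed

lemma L2norm_diff_commute: "L2norm (\<lambda>z. f z - g z) = L2norm (\<lambda>z. g z - f z)"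
  by (simp add: L2norm_def norm_minus_commute)

lemma L2_if_bounded_on_box:
  fixes f :: fn2
  assumes m: "f \<in> borel_measurable lborel" and b: "\<And>p. cmod (f p) \<le> c * indicator (cbox a b) p"
  shows "f \<in> L2" and "(\<integral>p. (cmod (f p))^2 \<partial>lborel) \<le> c^2 * measure lborel (cbox a b)"
proof -
  have ii: "integrable lborel (\<lambda>p. c^2 * indicator (cbox a b) p :: real)"
    using emeasure_lborel_cbox_finite[of a b] by (simp add: integrable_indicator_iff)
  have bd: "(cmod (f p))^2 \<le> c^2 * indicator (cbox a b) p" for p
    using b[of p] order_trans[OF norm_ge_zero b[of p]]
    by (cases "p \<in> cbox a b") (auto intro: power_mono)
  have i2: "integrable lborel (\<lambda>p. (cmod (f p))^2)"
    using m bd by (intro Bochner_Integration.integrable_bound[OF ii]) (auto intro!: AE_I2)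
  then show "f \<in> L2" using m by (simp add: L2_def)
  have "(\<integral>p. (cmod (f p))^2 \<partial>lborel) \<le> (\<integral>p. c^2 * indicator (cbox a b) p \<partial>lborel)"
    by (intro integral_mono i2 ii bd)
  then show "(\<integral>p. (cmod (f p))^2 \<partial>lborel) \<le> c^2 * measure lborel (cbox a b)" by simp
qed

lemma integral_norm_square_ge_on_box:
  fixes f :: fn2
  assumes f: "f \<in> L2" and b: "\<And>p. p \<in> cbox a b \<Longrightarrow> m \<le> cmod (f p)" and m: "0 \<le> m"
  shows "m^2 * measure lborel (cbox a b) \<le> (\<integral>p. (cmod (f p))^2 \<partial>lborel)"
proof -
  have "integrable lborel (\<lambda>p. m^2 * indicator (cbox a b) p :: real)"
    using emeasure_lborel_cbox_finite[of a b] by (simp add: integrable_indicator_iff)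
  moreover have "m^2 * indicator (cbox a b) p \<le> (cmod (f p))^2" for p
    using b[of p] m by (auto simp: indicator_def intro: power_mono)
  ultimately have "(\<integral>p. m^2 * indicator (cbox a b) p \<partial>lborel) \<le> (\<integral>p. (cmod (f p))^2 \<partial>lborel)"
    using f by (intro integral_mono) (auto simp: L2_def)
  then show ?thesis by simp
qed

lemma measure_cbox_pair:
  fixes a1 a2 b1 b2 :: real
  assumes "a1 \<le> b1" and "a2 \<le> b2"
  shows "measure lborel (cbox (a1,a2) (b1,b2)) = (b1 - a1) * (b2 - a2)"
  using assms by (simp add: measure_lborel_cbox_eq Basis_prod_def)

lemma closure_graph_diff:
  assumes lin: "\<And>f g. test_fn f \<Longrightarrow> test_fn g \<Longrightarrow> T (\<lambda>z. f z - g z) = (\<lambda>z. T f z - T g z)"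
    and G: "closure_graph T f g" and u: "test_fn u" "u \<in> L2" "T u \<in> L2"
  shows "closure_graph T (\<lambda>z. u z - f z) (\<lambda>z. T u z - g z)"
proof -
  obtain \<phi> where \<phi>: "\<forall>n. test_fn (\<phi> n)" "(\<lambda>n. L2norm (\<lambda>z. \<phi> n z - f z)) \<longlonglongrightarrow> 0"
    "(\<lambda>n. L2norm (\<lambda>z. T (\<phi> n) z - g z)) \<longlonglongrightarrow> 0" and fg: "f \<in> L2" "g \<in> L2"
    using G unfolding closure_graph_def by blast
  define \<psi> where "\<psi> n = (\<lambda>z. u z - \<phi> n z)" for n
  have "test_fn (\<psi> n)" for n unfolding \<psi>_def using \<phi> u by (auto intro: test_fn_diff)
  moreover have "L2norm (\<lambda>z. \<psi> n z - (u z - f z)) = L2norm (\<lambda>z. \<phi> n z - f z)" for n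
    using L2norm_diff_commute[of "\<lambda>z. \<phi> n z" f] by (simp add: \<psi>_def)
  moreover have "L2norm (\<lambda>z. T (\<psi> n) z - (T u z - g z)) = L2norm (\<lambda>z. T (\<phi> n) z - g z)" for n
    using L2norm_diff_commute[of "\<lambda>z. T (\<phi> n) z" g] lin[OF u(1) \<phi>(1)[rule_format, of n]]
    by (simp add: \<psi>_def)
  ultimately show ?thesis unfolding closure_graph_def
    using \<phi> L2_diff[OF u(2) fg(1)] L2_diff[OF u(3) fg(2)]
    by (intro conjI exI[of _ \<psi>]) auto
qed

lemma not_in_resolvent_if_approximate_eigenfunctions:
  assumes lin: "\<And>f g. test_fn f \<Longrightarrow> test_fn g \<Longrightarrow> T (\<lambda>z. f z - g z) = (\<lambda>z. T f z - T g z)"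
    and approx: "\<And>e. e > 0 \<Longrightarrow> \<exists>u. test_fn u \<and> u \<in> L2 \<and> T u \<in> L2 \<and> L2norm u > 0 \<and>
              L2norm (\<lambda>p. T u p - z * u p) \<le> e * L2norm u"
  shows "\<not> in_resolvent (closure_graph T) z"
proof
  assume "in_resolvent (closure_graph T) z"
  then obtain C where C: "\<forall>h\<in>L2. \<exists>f g. closure_graph T f g \<and> (AE p in lborel. g p - z * f p = h p)
        \<and> L2norm f \<le> C * L2norm h"
    and inj: "\<forall>f g. closure_graph T f g \<and> (AE p in lborel. g p = z * f p) \<longrightarrow> (AE p in lborel. f p = 0)"
    unfolding in_resolvent_def by blast
  define e where "e = 1 / (\<bar>C\<bar> + 1)"
  have "e > 0" unfolding e_def by simp
  then obtain u where u: "test_fn u" "u \<in> L2" "T u \<in> L2" "L2norm u > 0"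
      "L2norm (\<lambda>p. T u p - z * u p) \<le> e * L2norm u"
    using approx by blast
  define h where "h = (\<lambda>p. T u p - z * u p)"
  have "h \<in> L2" unfolding h_def by (intro L2_diff L2_cmult u)
  then obtain f g where fg: "closure_graph T f g" "AE p in lborel. g p - z * f p = h p"
      "L2norm f \<le> C * L2norm h"
    using C by blast
  have "closure_graph T (\<lambda>p. u p - f p) (\<lambda>p. T u p - g p)"
    by (rule closure_graph_diff[OF lin fg(1) u(1-3)])
  moreover have "AE p in lborel. T u p - g p = z * (u p - f p)"
    using fg(2) by (auto simp: h_def algebra_simps elim!: AE_mp)
  ultimately have "AE p in lborel. u p - f p = 0"
    using inj by blast
  then have "AE p in lborel. u p = f p" by (rule AE_mp) simp
  then have "L2norm u = L2norm f"
    using fg(1) u(2) by (intro L2norm_cong_AE) (auto simp: closure_graph_def)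
  also have "\<dots> \<le> C * L2norm h" by (rule fg(3))
  also have "\<dots> \<le> \<bar>C\<bar> * L2norm h"
    by (intro mult_right_mono) (auto simp: L2norm_def)
  also have "\<dots> \<le> \<bar>C\<bar> * (e * L2norm u)" using u(5) unfolding h_def by (intro mult_left_mono) auto
  also have "\<dots> < L2norm u" using u(4) by (simp add: e_def divide_less_eq)
  finally show False by simp
qed

lemma ess_spectrum_if_ray_in_spectrum:
  assumes "\<And>zeta. a \<le> zeta \<Longrightarrow> complex_of_real zeta \<in> op_spectrum G"
  shows "complex_of_real ` {a..} \<subseteq> ess_spectrum G"
proof
  fix z assume "z \<in> complex_of_real ` {a..}"
  then obtain zeta where zeta: "a \<le> zeta" and z: "z = complex_of_real zeta" by auto
  have "\<not> (ball z e \<inter> op_spectrum G \<subseteq> {z})" if e: "e > 0" for e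
  proof -
    have "complex_of_real (zeta + e/2) \<in> op_spectrum G" using assms[of "zeta + e/2"] zeta e by simp
    moreover have "dist z (complex_of_real (zeta + e/2)) < e"
      using e by (simp add: z dist_norm flip: of_real_diff)
    ultimately show ?thesis using e z by auto
  qed
  then show "z \<in> ess_spectrum G"
    using assms[OF zeta] z by (auto simp: ess_spectrum_def disc_spectrum_def)
qed

section \<open>Quasimodes built on the shifted harmonic oscillator\<close>

definition profile :: "real \<Rightarrow> real \<Rightarrow> real \<Rightarrow> real \<Rightarrow> real" where
  "profile nu y0 R y = gauss nu y0 y * cutoff y0 R y"

definition profile' :: "real \<Rightarrow> real \<Rightarrow> real \<Rightarrow> real \<Rightarrow> real" where
  "profile' nu y0 R y = gauss' nu y0 y * cutoff y0 R y + gauss nu y0 y * cutoff' y0 R y"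

definition profile'' :: "real \<Rightarrow> real \<Rightarrow> real \<Rightarrow> real \<Rightarrow> real" where
  "profile'' nu y0 R y = gauss'' nu y0 y * cutoff y0 R y + 2 * gauss' nu y0 y * cutoff' y0 R y
     + gauss nu y0 y * cutoff'' y0 R y"

lemma profile_has_derivative: "R \<noteq> 0 \<Longrightarrow> (profile nu y0 R has_real_derivative profile' nu y0 R y) (at y)"
  unfolding profile_def[abs_def] profile'_def
  by (rule DERIV_mult[OF gauss_has_derivative cutoff_has_derivative, THEN DERIV_cong])
     (auto simp: algebra_simps)

lemma profile'_has_derivative: "R \<noteq> 0 \<Longrightarrow> (profile' nu y0 R has_real_derivative profile'' nu y0 R y) (at y)"
  unfolding profile'_def[abs_def] profile''_def
  by (rule DERIV_add[OF DERIV_mult[OF gauss'_has_derivative cutoff_has_derivative]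
        DERIV_mult[OF gauss_has_derivative cutoff'_has_derivative], THEN DERIV_cong])
     (auto simp: algebra_simps)

lemma smooth_upto_profile: "smooth_upto n (profile nu y0 R)"
  unfolding profile_def[abs_def] by (intro smooth_upto_mult smooth_upto_gauss smooth_upto_cutoff)

lemma profile_nonneg: "0 \<le> nu \<Longrightarrow> 0 \<le> profile nu y0 R y"
  and profile_le_one: "0 \<le> nu \<Longrightarrow> profile nu y0 R y \<le> 1"
  using gauss_pos[of nu y0 y] gauss_le_one[of nu y0 y] cutoff_nonneg[of y0 R y] cutoff_le_one[of y0 R y]
  by (auto simp: profile_def intro: mult_le_one)

definition wave :: "real \<Rightarrow> real \<Rightarrow> real \<Rightarrow> complex" where
  "wave k L x = cis (k*x) * complex_of_real (cutoff (2*L) L x)"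

definition wave' :: "real \<Rightarrow> real \<Rightarrow> real \<Rightarrow> complex" where
  "wave' k L x = cis (k*x) * (\<i> * complex_of_real (k * cutoff (2*L) L x) + complex_of_real (cutoff' (2*L) L x))"

definition wave'' :: "real \<Rightarrow> real \<Rightarrow> real \<Rightarrow> complex" where
  "wave'' k L x = cis (k*x) * (complex_of_real (cutoff'' (2*L) L x - k^2 * cutoff (2*L) L x)
     + 2 * \<i> * complex_of_real (k * cutoff' (2*L) L x))"

lemma cis_mult_has_vector_derivative:
  assumes "(h has_vector_derivative h') (at x)"
  shows "((\<lambda>x. cis (k*x) * h x) has_vector_derivative cis (k*x) * (\<i> * complex_of_real k * h x + h')) (at x)"
proof -
  have cis_eq: "cis a = complex_of_real (cos a) + \<i> * complex_of_real (sin a)" for a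
    by (simp add: complex_eq_iff)
  have "((\<lambda>x. complex_of_real (cos (k*x)) + \<i> * complex_of_real (sin (k*x))) has_vector_derivative
      complex_of_real (- sin (k*x) * k) + \<i> * complex_of_real (cos (k*x) * k)) (at x)"
    by (intro has_vector_derivative_add has_vector_derivative_mult_right has_vector_derivative_of_real)
       (auto intro!: derivative_eq_intros)
  moreover have "complex_of_real (- sin (k*x) * k) + \<i> * complex_of_real (cos (k*x) * k)
      = \<i> * complex_of_real k * cis (k*x)"
    by (simp add: complex_eq_iff)
  ultimately have "((\<lambda>x. cis (k*x)) has_vector_derivative \<i> * complex_of_real k * cis (k*x)) (at x)"
    unfolding cis_eq by simp
  from has_vector_derivative_mult[OF this assms] show ?thesis
    by (simp add: algebra_simps)
qed

lemma wave_has_vector_derivative: "L \<noteq> 0 \<Longrightarrow> (wave k L has_vector_derivative wave' k L x) (at x)"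
  unfolding wave_def[abs_def] wave'_def
  using cis_mult_has_vector_derivative[OF has_vector_derivative_of_real[OF cutoff_has_derivative]]
  by (simp add: mult.assoc)

lemma wave'_has_vector_derivative: "L \<noteq> 0 \<Longrightarrow> (wave' k L has_vector_derivative wave'' k L x) (at x)"
proof -
  assume L: "L \<noteq> 0"
  have "((\<lambda>x. \<i> * complex_of_real (k * cutoff (2*L) L x) + complex_of_real (cutoff' (2*L) L x))
      has_vector_derivative
      \<i> * complex_of_real (k * cutoff' (2*L) L x) + complex_of_real (cutoff'' (2*L) L x)) (at x)"
    using L by (intro has_vector_derivative_add has_vector_derivative_mult_right has_vector_derivative_of_real
        DERIV_cmult cutoff_has_derivative cutoff'_has_derivative)
  from cis_mult_has_vector_derivative[OF this, of k] show ?thesis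
    unfolding wave'_def[abs_def] wave''_def
    by (rule back_subst[where P = "\<lambda>v. (_ has_vector_derivative v) (at x)"])
       (simp add: algebra_simps power2_eq_square)
qed

definition quasimode :: "real \<Rightarrow> real \<Rightarrow> real \<Rightarrow> real \<Rightarrow> fn2" where
  "quasimode k nu y0 R = (\<lambda>(x,y). wave k R x * complex_of_real (profile nu y0 R y))"

(* nu = sqrt (w^2 + B^2), y0 = -kB / nu^2 and zeta = nu + k^2 w^2 / nu^2, written without division. *)
definition landau_params :: "real \<Rightarrow> real \<Rightarrow> real \<Rightarrow> real \<Rightarrow> real \<Rightarrow> real \<Rightarrow> bool" where
  "landau_params w B nu k y0 zeta \<longleftrightarrow>
     nu > 0 \<and> nu^2 = w^2 + B^2 \<and> y0 * nu^2 = -(k*B) \<and> zeta * nu^2 = nu^3 + k^2 * w^2"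

lemma harmonic_oscillator_identity:
  assumes "landau_params w B nu k y0 zeta"
  shows "(k + B*y)^2 + w^2 * y^2 - zeta = nu^2 * (y - y0)^2 - nu"
proof -
  have h: "nu > 0" "nu^2 = w^2 + B^2" "y0 * nu^2 = -(k*B)" "zeta * nu^2 = nu^3 + k^2 * w^2"
    using assms by (auto simp: landau_params_def)
  have "nu^2 * ((k + B*y)^2 + w^2 * y^2 - zeta) = nu^2 * (nu^2 * (y - y0)^2 - nu)"
    using h(2-4) by algebra
  then show ?thesis using h(1) by simp
qed

lemma profile_defect:
  assumes "landau_params w B nu k y0 zeta"
  shows "- profile'' nu y0 R y + ((k + B*y)^2 + w^2 * y^2 - zeta) * profile nu y0 R y
       = - 2 * gauss' nu y0 y * cutoff' y0 R y - gauss nu y0 y * cutoff'' y0 R y"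
  unfolding harmonic_oscillator_identity[OF assms]
  by (simp add: profile_def profile''_def gauss''_def algebra_simps)

definition quasimode_residual ::
    "real \<Rightarrow> real \<Rightarrow> real \<Rightarrow> (real \<Rightarrow> real) \<Rightarrow> real \<Rightarrow> real \<Rightarrow> real \<Rightarrow> real \<Rightarrow> real \<Rightarrow> real \<Rightarrow> complex" where
  "quasimode_residual B w lam V k nu y0 R x y =
     complex_of_real (cutoff (2*R) R x * (- 2 * gauss' nu y0 y * cutoff' y0 R y - gauss nu y0 y * cutoff'' y0 R y
         + lam * y^2 * V (x*y) * profile nu y0 R y) - cutoff'' (2*R) R x * profile nu y0 R y)
     - 2 * \<i> * complex_of_real ((k + B*y) * cutoff' (2*R) R x * profile nu y0 R y)"

lemma Hop_quasimode:
  assumes P: "landau_params w B nu k y0 zeta" and R: "R \<noteq> 0"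
  shows "Hop B w lam V (quasimode k nu y0 R) (x,y) - complex_of_real zeta * quasimode k nu y0 R (x,y)
     = cis (k*x) * quasimode_residual B w lam V k nu y0 R x y"
proof -
  let ?c = "cutoff (2*R) R x" and ?c' = "cutoff' (2*R) R x" and ?c'' = "cutoff'' (2*R) R x"
  let ?g = "profile nu y0 R y" and ?g'' = "profile'' nu y0 R y"
  have "Hop B w lam V (quasimode k nu y0 R) (x,y) - complex_of_real zeta * quasimode k nu y0 R (x,y)
    = (- wave'' k R x - 2 * \<i> * complex_of_real (B*y) * wave' k R x + complex_of_real ((B*y)^2) * wave k R x)
        * complex_of_real ?g - wave k R x * complex_of_real ?g''
      + complex_of_real (w^2 * y^2 + lam * y^2 * V (x*y) - zeta) * (wave k R x * complex_of_real ?g)"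
    unfolding quasimode_def
    using Hop_product[OF wave_has_vector_derivative wave'_has_vector_derivative
        has_vector_derivative_of_real[OF profile_has_derivative]
        has_vector_derivative_of_real[OF profile'_has_derivative], OF R R R R]
    by (simp add: algebra_simps)
  also have "\<dots> = cis (k*x) * (complex_of_real (?c * (- ?g'' + ((k + B*y)^2 + w^2 * y^2 - zeta) * ?g
         + lam * y^2 * V (x*y) * ?g) - ?c'' * ?g) - 2 * \<i> * complex_of_real ((k + B*y) * ?c' * ?g))"
    by (simp add: wave_def wave'_def wave''_def algebra_simps power2_eq_square)
  also have "\<dots> = cis (k*x) * quasimode_residual B w lam V k nu y0 R x y"
    unfolding quasimode_residual_def
    by (simp only: distrib_left[symmetric] add.assoc profile_defect[OF P])
  finally show ?thesis .
qed

definition quasimode_box :: "real \<Rightarrow> real \<Rightarrow> (real \<times> real) set" where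
  "quasimode_box y0 R = cbox (R, y0 - R) (3*R, y0 + R)"

lemma outside_quasimode_box:
  assumes "R > 0" and "(x,y) \<notin> quasimode_box y0 R"
  obtains "R < \<bar>x - 2*R\<bar>" | "R < \<bar>y - y0\<bar>"
  using assms by (force simp: quasimode_box_def cbox_Pair_eq abs_if)

lemma quasimode_eq_0:
  assumes "R > 0" and "(x,y) \<notin> quasimode_box y0 R"
  shows "quasimode k nu y0 R (x,y) = 0"
  using assms(2)
  by (rule outside_quasimode_box[OF assms(1)])
     (auto simp: quasimode_def wave_def profile_def cutoff_eq_0[OF assms(1)])

lemma quasimode_residual_eq_0:
  assumes "R > 0" and "(x,y) \<notin> quasimode_box y0 R"
  shows "quasimode_residual B w lam V k nu y0 R x y = 0"
  using assms(2)
  by (rule outside_quasimode_box[OF assms(1)])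
     (auto simp: quasimode_residual_def profile_def cutoff_eq_0[OF assms(1)]
        cutoff'_eq_0[OF assms(1)] cutoff''_eq_0[OF assms(1)])

lemma smooth2_quasimode: "smooth2 (quasimode k nu y0 R)"
proof -
  have smooth: "smooth_upto n (\<lambda>x. cos (k*x) * cutoff (2*R) R x)"
    "smooth_upto n (\<lambda>x. sin (k*x) * cutoff (2*R) R x)" for n
    using smooth_upto_cos_sin[OF smooth_upto_mult[OF smooth_upto_const smooth_upto_ident]]
    by (auto intro!: smooth_upto_mult smooth_upto_cutoff)
  have eq: "quasimode k nu y0 R = (\<lambda>(x,y). (complex_of_real (cos (k*x) * cutoff (2*R) R x)
      + \<i> * complex_of_real (sin (k*x) * cutoff (2*R) R x)) * complex_of_real (profile nu y0 R y))"
    by (auto simp: quasimode_def wave_def complex_eq_iff)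
  show ?thesis unfolding eq by (rule smooth2_product[OF smooth smooth_upto_profile])
qed

lemma test_fn_quasimode:
  assumes "R > 0"
  shows "test_fn (quasimode k nu y0 R)"
proof -
  have "{z. quasimode k nu y0 R z \<noteq> 0} \<subseteq> quasimode_box y0 R"
    using quasimode_eq_0[OF assms] by (metis (mono_tags) mem_Collect_eq prod.collapse subsetI)
  then have "bounded {z. quasimode k nu y0 R z \<noteq> 0}"
    unfolding quasimode_box_def by (rule bounded_subset[OF bounded_cbox])
  then show ?thesis using smooth2_quasimode by (simp add: test_fn_def)
qed

lemma norm_quasimode: "0 \<le> nu \<Longrightarrow> cmod (quasimode k nu y0 R (x,y)) = cutoff (2*R) R x * profile nu y0 R y"
  using cutoff_nonneg[of "2*R" R x] profile_nonneg[of nu y0 R y]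
  by (simp add: quasimode_def wave_def norm_mult)

lemma norm_quasimode_le_one: "0 \<le> nu \<Longrightarrow> cmod (quasimode k nu y0 R (x,y)) \<le> 1"
  unfolding norm_quasimode using cutoff_nonneg[of "2*R" R x] cutoff_le_one[of "2*R" R x]
    profile_nonneg[of nu y0 R y] profile_le_one[of nu y0 R y]
  by (auto intro: mult_le_one)

lemma norm_quasimode_ge:
  assumes nu: "0 \<le> nu" and R: "1 \<le> R" and xy: "(x,y) \<in> cbox (3*R/2, y0 - 1/2) (5*R/2, y0 + 1/2)"
  shows "exp (-4) * exp (-(nu/8)) * exp (-4) \<le> cmod (quasimode k nu y0 R (x,y))"
proof -
  have "3*R/2 \<le> x" "x \<le> 5*R/2" "y0 - 1/2 \<le> y" "y \<le> y0 + 1/2"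
    using xy by (simp_all add: cbox_Pair_eq)
  then have x: "\<bar>x - 2*R\<bar> \<le> R/2" and y: "\<bar>y - y0\<bar> \<le> 1/2" "\<bar>y - y0\<bar> \<le> R/2"
    using R unfolding abs_le_iff by linarith+
  have "exp (-4) * exp (-(nu/8)) * exp (-4) \<le> cutoff (2*R) R x * gauss nu y0 y * cutoff y0 R y"
    using cutoff_ge[OF _ x] gauss_ge[OF nu y(1)] cutoff_ge[OF _ y(2)] R
      cutoff_nonneg[of "2*R" R x] gauss_pos[of nu y0 y]
    by (intro mult_mono) auto
  then show ?thesis unfolding norm_quasimode[OF nu] profile_def by (simp add: mult.assoc)
qed

lemma abs_shift_mult_profile_le:
  assumes nu: "nu > 0"
  shows "\<bar>(k + B*y) * profile nu y0 R y\<bar> \<le> \<bar>k + B*y0\<bar> + \<bar>B\<bar> * (1 + 2/nu)"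
proof -
  have g: "0 \<le> profile nu y0 R y" "profile nu y0 R y \<le> 1"
    using profile_nonneg profile_le_one nu by auto
  have "\<bar>y - y0\<bar> * profile nu y0 R y \<le> \<bar>y - y0\<bar> * gauss nu y0 y"
    using cutoff_le_one[of y0 R y] gauss_pos[of nu y0 y]
    unfolding profile_def by (intro mult_left_mono mult_left_le) auto
  also have "\<dots> \<le> 1 + 2/nu" by (rule abs_mult_gauss_le[OF nu])
  finally have "\<bar>B\<bar> * (\<bar>y - y0\<bar> * profile nu y0 R y) \<le> \<bar>B\<bar> * (1 + 2/nu)"
    by (rule mult_left_mono) simp
  moreover have "\<bar>k + B*y0\<bar> * profile nu y0 R y \<le> \<bar>k + B*y0\<bar>"
    using g by (simp add: mult_left_le)
  moreover have "\<bar>(k + B*y) * profile nu y0 R y\<bar>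
      \<le> \<bar>k + B*y0\<bar> * profile nu y0 R y + \<bar>B\<bar> * (\<bar>y - y0\<bar> * profile nu y0 R y)"
  proof -
    have "k + B*y = (k + B*y0) + B * (y - y0)" by (simp add: algebra_simps)
    then have "\<bar>k + B*y\<bar> \<le> \<bar>k + B*y0\<bar> + \<bar>B\<bar> * \<bar>y - y0\<bar>"
      by (metis abs_mult abs_triangle_ineq)
    have "\<bar>(k + B*y) * profile nu y0 R y\<bar> = \<bar>k + B*y\<bar> * profile nu y0 R y"
      using g by (simp add: abs_mult)
    also have "\<dots> \<le> (\<bar>k + B*y0\<bar> + \<bar>B\<bar> * \<bar>y - y0\<bar>) * profile nu y0 R y"
      by (rule mult_right_mono) (use g \<open>\<bar>k + B*y\<bar> \<le> _\<close> in auto)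
    finally show ?thesis by (simp add: algebra_simps)
  qed
  ultimately show ?thesis by linarith
qed

lemma potential_term_le:
  assumes R: "R > 0" and V: "\<forall>s. \<bar>V s\<bar> \<le> Vm" and supp: "\<forall>s. V s \<noteq> 0 \<longrightarrow> \<bar>s\<bar> \<le> s0"
  shows "\<bar>lam * y^2 * V (x*y)\<bar> * cutoff (2*R) R x \<le> \<bar>lam\<bar> * s0^2 * Vm / R^2"
proof (cases "cutoff (2*R) R x = 0 \<or> V (x*y) = 0")
  case True
  have "0 \<le> Vm" using V by (meson abs_ge_zero order_trans)
  then show ?thesis using True R by auto
next
  case False
  then have "\<bar>x - 2*R\<bar> < R"
    using cutoff_eq_0[OF R, of x "2*R"] by linarith
  then have "R < x" by (simp add: abs_less_iff)
  moreover have xy: "\<bar>x*y\<bar> \<le> s0" using supp False by blast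
  moreover have "0 < x" using R \<open>R < x\<close> by linarith
  ultimately have "R * \<bar>y\<bar> \<le> s0"
    using mult_right_mono[of R x "\<bar>y\<bar>"] by (simp add: abs_mult)
  then have "\<bar>y\<bar> \<le> s0 / R" using R by (simp add: field_simps)
  then have "y^2 \<le> s0^2 / R^2"
    by (metis abs_ge_zero power2_abs power_divide power_mono)
  then have "\<bar>lam\<bar> * y^2 * \<bar>V (x*y)\<bar> \<le> \<bar>lam\<bar> * (s0^2 / R^2) * Vm"
    using V by (intro mult_mono) auto
  moreover have "\<bar>lam * y^2 * V (x*y)\<bar> * cutoff (2*R) R x \<le> \<bar>lam * y^2 * V (x*y)\<bar>"
    using cutoff_nonneg[of "2*R" R x] cutoff_le_one[of "2*R" R x] by (simp add: mult_left_le)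
  ultimately show ?thesis by (simp add: abs_mult)
qed

lemma abs_cutoff''_le_inverse:
  assumes "\<And>t. \<bar>bump'' t\<bar> \<le> K" and "1 \<le> R"
  shows "\<bar>cutoff'' c R x\<bar> \<le> K / R"
proof -
  have "0 \<le> K" using assms(1)[of 0] by linarith
  then have "K / R^2 \<le> K / R"
    using assms(2) by (intro divide_left_mono) (auto simp: power2_eq_square)
  with abs_cutoff''_le[of K R c x] assms show ?thesis by fastforce
qed

lemma abs_profile_defect_le:
  assumes nu: "nu > 0" and R: "1 \<le> R" and K: "\<And>t. \<bar>bump' t\<bar> \<le> K \<and> \<bar>bump'' t\<bar> \<le> K"
  shows "\<bar>2 * gauss' nu y0 y * cutoff' y0 R y + gauss nu y0 y * cutoff'' y0 R y\<bar> \<le> (2*nu + 5) * K / R"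
proof -
  have "\<bar>gauss' nu y0 y\<bar> * \<bar>cutoff' y0 R y\<bar> \<le> (nu + 2) * (K / R)"
    using abs_gauss'_le[OF nu] abs_cutoff'_le[of K R y0 y] K R nu by (intro mult_mono) auto
  moreover have "gauss nu y0 y * \<bar>cutoff'' y0 R y\<bar> \<le> 1 * (K / R)"
    using gauss_pos[of nu y0 y] gauss_le_one[of nu y0 y] abs_cutoff''_le_inverse[of K R y0 y] K R nu
    by (intro mult_mono) auto
  moreover have "(2*nu + 5) * K / R = 2 * ((nu + 2) * (K / R)) + 1 * (K / R)"
    by (simp add: add_divide_distrib algebra_simps)
  ultimately show ?thesis
    using abs_triangle_ineq[of "2 * gauss' nu y0 y * cutoff' y0 R y" "gauss nu y0 y * cutoff'' y0 R y"]
      gauss_pos[of nu y0 y]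
    by (simp add: abs_mult)
qed

lemma norm_of_real_minus_imaginary_le:
  "cmod (complex_of_real a - 2 * \<i> * complex_of_real b) \<le> \<bar>a\<bar> + \<bar>2 * b\<bar>"
  using norm_triangle_ineq4[of "complex_of_real a" "2 * \<i> * complex_of_real b"]
  by (simp add: norm_mult abs_mult)

lemma norm_quasimode_residual_le_terms:
  assumes nu: "0 \<le> nu"
  shows "cmod (quasimode_residual B w lam V k nu y0 R x y)
    \<le> cutoff (2*R) R x * \<bar>2 * gauss' nu y0 y * cutoff' y0 R y + gauss nu y0 y * cutoff'' y0 R y\<bar>
      + \<bar>lam * y^2 * V (x*y)\<bar> * cutoff (2*R) R x * profile nu y0 R y
      + \<bar>cutoff'' (2*R) R x\<bar> * profile nu y0 R y
      + 2 * (\<bar>(k + B*y) * profile nu y0 R y\<bar> * \<bar>cutoff' (2*R) R x\<bar>)"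
proof -
  define c where "c = cutoff (2*R) R x"
  define g where "g = profile nu y0 R y"
  define d where "d = 2 * gauss' nu y0 y * cutoff' y0 R y + gauss nu y0 y * cutoff'' y0 R y"
  define P where "P = lam * y^2 * V (x*y)"
  have c: "0 \<le> c" unfolding c_def by (rule cutoff_nonneg)
  have g: "0 \<le> g" unfolding g_def using profile_nonneg nu by auto
  have "cmod (quasimode_residual B w lam V k nu y0 R x y)
      \<le> \<bar>c * (- d + P * g) - cutoff'' (2*R) R x * g\<bar> + \<bar>2 * ((k + B*y) * cutoff' (2*R) R x * g)\<bar>"
    unfolding quasimode_residual_def c_def d_def P_def g_def
    by (rule order_trans[OF norm_of_real_minus_imaginary_le]) (simp add: algebra_simps)
  also have "\<dots> \<le> \<bar>c * (- d + P * g)\<bar> + \<bar>cutoff'' (2*R) R x * g\<bar>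
      + \<bar>2 * ((k + B*y) * cutoff' (2*R) R x * g)\<bar>"
    using abs_triangle_ineq4 by (rule add_right_mono)
  also have "\<dots> = c * \<bar>- d + P * g\<bar> + \<bar>cutoff'' (2*R) R x\<bar> * g
      + 2 * (\<bar>(k + B*y) * g\<bar> * \<bar>cutoff' (2*R) R x\<bar>)"
    using c g by (simp add: abs_mult mult_ac)
  also have "\<dots> \<le> c * (\<bar>d\<bar> + \<bar>P\<bar> * g) + \<bar>cutoff'' (2*R) R x\<bar> * g
      + 2 * (\<bar>(k + B*y) * g\<bar> * \<bar>cutoff' (2*R) R x\<bar>)"
    using c g abs_triangle_ineq[of "- d" "P * g"] by (intro add_right_mono mult_left_mono) (auto simp: abs_mult)
  finally show ?thesis unfolding c_def g_def d_def P_def by (simp add: algebra_simps)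
qed

lemma norm_quasimode_residual_le:
  assumes nu: "nu > 0" and R: "1 \<le> R"
    and K: "\<And>t. \<bar>bump' t\<bar> \<le> K \<and> \<bar>bump'' t\<bar> \<le> K"
    and V: "\<forall>s. \<bar>V s\<bar> \<le> Vm" and supp: "\<forall>s. V s \<noteq> 0 \<longrightarrow> \<bar>s\<bar> \<le> s0"
  shows "cmod (quasimode_residual B w lam V k nu y0 R x y)
    \<le> ((2*nu + 6 + 2 * (\<bar>k + B*y0\<bar> + \<bar>B\<bar> * (1 + 2/nu))) * K + \<bar>lam\<bar> * s0^2 * Vm) / R"
proof -
  define c where "c = cutoff (2*R) R x"
  define g where "g = profile nu y0 R y"
  define M where "M = \<bar>k + B*y0\<bar> + \<bar>B\<bar> * (1 + 2/nu)"
  have R0: "0 < R" using R by simp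
  have c: "0 \<le> c" "c \<le> 1" unfolding c_def by (rule cutoff_nonneg cutoff_le_one)+
  have g: "0 \<le> g" "g \<le> 1" unfolding g_def using profile_nonneg profile_le_one nu by auto
  have "c * \<bar>2 * gauss' nu y0 y * cutoff' y0 R y + gauss nu y0 y * cutoff'' y0 R y\<bar> \<le> (2*nu + 5) * K / R"
    using abs_profile_defect_le[OF nu R K, of y0 y] c
      mult_left_le_one_le[of "\<bar>2 * gauss' nu y0 y * cutoff' y0 R y + gauss nu y0 y * cutoff'' y0 R y\<bar>" c]
    by linarith
  moreover have "\<bar>lam * y^2 * V (x*y)\<bar> * c * g \<le> \<bar>lam\<bar> * s0^2 * Vm / R"
  proof -
    have "\<bar>lam * y^2 * V (x*y)\<bar> * c * g \<le> \<bar>lam\<bar> * s0^2 * Vm / R^2"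
      using potential_term_le[OF R0 V supp, of lam y x] c g mult_left_le[of g "\<bar>lam * y^2 * V (x*y)\<bar> * c"]
      unfolding c_def by fastforce
    also have "\<dots> \<le> \<bar>lam\<bar> * s0^2 * Vm / R"
      using R V[rule_format, of 0] by (intro divide_left_mono) (auto simp: power2_eq_square)
    finally show ?thesis .
  qed
  moreover have "\<bar>cutoff'' (2*R) R x\<bar> * g \<le> K / R"
    using abs_cutoff''_le_inverse[of K R "2*R" x] K R g mult_left_le[of g "\<bar>cutoff'' (2*R) R x\<bar>"]
    by fastforce
  moreover have "\<bar>(k + B*y) * g\<bar> * \<bar>cutoff' (2*R) R x\<bar> \<le> M * (K / R)"
    using abs_shift_mult_profile_le[OF nu, of k B y y0 R] abs_cutoff'_le[of K R "2*R" x] K R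
    unfolding M_def g_def by (intro mult_mono) auto
  moreover have "((2*nu + 6 + 2 * M) * K + \<bar>lam\<bar> * s0^2 * Vm) / R
      = (2*nu + 5) * K / R + \<bar>lam\<bar> * s0^2 * Vm / R + K / R + 2 * (M * (K / R))"
    using R0 by (simp add: field_simps)
  ultimately show ?thesis
    using norm_quasimode_residual_le_terms[of nu B w lam V k y0 R x y] nu
    unfolding M_def c_def g_def by linarith
qed

lemma continuous_on_Hop_quasimode:
  assumes P: "landau_params w B nu k y0 zeta" and R: "R > 0" and V: "continuous_on UNIV V"
  shows "continuous_on UNIV (Hop B w lam V (quasimode k nu y0 R))"
proof -
  have "continuous_on UNIV (\<lambda>p::real \<times> real. V (fst p * snd p))"
    by (intro continuous_on_compose2[OF V] continuous_intros) auto
  then have "continuous_on UNIV (\<lambda>p. cis (k * fst p) * quasimode_residual B w lam V k nu y0 R (fst p) (snd p)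
      + complex_of_real zeta * quasimode k nu y0 R p)"
    using smooth2D(1)[OF smooth2_quasimode]
    unfolding quasimode_residual_def profile_def cis_conv_exp
    by (intro continuous_intros) auto
  moreover have "Hop B w lam V (quasimode k nu y0 R) p
      = cis (k * fst p) * quasimode_residual B w lam V k nu y0 R (fst p) (snd p)
        + complex_of_real zeta * quasimode k nu y0 R p" for p
    using Hop_quasimode[OF P, of R lam V "fst p" "snd p"] R by (simp add: algebra_simps)
  ultimately show ?thesis by simp
qed

lemma norm_quasimode_le_indicator:
  assumes "0 \<le> nu" and "R > 0"
  shows "cmod (quasimode k nu y0 R p) \<le> indicator (quasimode_box y0 R) p"
  using norm_quasimode_le_one[OF assms(1), of k y0 R "fst p" "snd p"]
    quasimode_eq_0[OF assms(2), of "fst p" "snd p"]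
  by (cases "p \<in> quasimode_box y0 R") auto

lemma norm_Hop_quasimode_minus_le_indicator:
  assumes P: "landau_params w B nu k y0 zeta" and R: "1 \<le> R"
    and K: "\<And>t. \<bar>bump' t\<bar> \<le> K \<and> \<bar>bump'' t\<bar> \<le> K"
    and V: "\<forall>s. \<bar>V s\<bar> \<le> Vm" and supp: "\<forall>s. V s \<noteq> 0 \<longrightarrow> \<bar>s\<bar> \<le> s0"
  shows "cmod (Hop B w lam V (quasimode k nu y0 R) p - complex_of_real zeta * quasimode k nu y0 R p)
    \<le> ((2*nu + 6 + 2 * (\<bar>k + B*y0\<bar> + \<bar>B\<bar> * (1 + 2/nu))) * K + \<bar>lam\<bar> * s0^2 * Vm) / R
        * indicator (quasimode_box y0 R) p"
proof -
  have nu: "nu > 0" using P by (simp add: landau_params_def)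
  have R0: "R > 0" using R by simp
  show ?thesis
    using Hop_quasimode[OF P, of R lam V "fst p" "snd p"] R0
      norm_quasimode_residual_le[OF nu R K V supp, of B w lam k y0 "fst p" "snd p"]
      quasimode_residual_eq_0[OF R0, of "fst p" "snd p" y0 B w lam V k nu]
    by (cases "p \<in> quasimode_box y0 R") (auto simp: norm_mult)
qed

lemma quasimode_L2_estimates:
  fixes lam :: real
  assumes P: "landau_params w B nu k y0 zeta" and R: "1 \<le> R"
    and K: "\<And>t. \<bar>bump' t\<bar> \<le> K \<and> \<bar>bump'' t\<bar> \<le> K"
    and V: "\<forall>s. \<bar>V s\<bar> \<le> Vm" and supp: "\<forall>s. V s \<noteq> 0 \<longrightarrow> \<bar>s\<bar> \<le> s0" and Vc: "continuous_on UNIV V"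
  defines "u \<equiv> quasimode k nu y0 R"
    and "D \<equiv> (2*nu + 6 + 2 * (\<bar>k + B*y0\<bar> + \<bar>B\<bar> * (1 + 2/nu))) * K + \<bar>lam\<bar> * s0^2 * Vm"
  shows "u \<in> L2" and "Hop B w lam V u \<in> L2"
    and "(\<integral>p. (cmod (Hop B w lam V u p - complex_of_real zeta * u p))^2 \<partial>lborel) \<le> 4 * D^2"
    and "(exp (-4) * exp (-(nu/8)) * exp (-4))^2 * R \<le> (\<integral>p. (cmod (u p))^2 \<partial>lborel)"
proof -
  have nu: "nu > 0" using P by (simp add: landau_params_def)
  have R0: "R > 0" using R by simp
  have box: "quasimode_box y0 R = cbox (R, y0 - R) (3*R, y0 + R)" by (rule quasimode_box_def)
  have um: "u \<in> borel_measurable lborel" and Hm: "Hop B w lam V u \<in> borel_measurable lborel"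
    unfolding u_def using smooth2D(1)[OF smooth2_quasimode] continuous_on_Hop_quasimode[OF P R0 Vc]
    by (auto intro: borel_measurable_continuous_onI)
  have hu: "cmod (u p) \<le> 1 * indicator (quasimode_box y0 R) p" for p
    using norm_quasimode_le_indicator[OF _ R0, of nu k y0 p] nu unfolding u_def by simp
  have hE: "cmod (Hop B w lam V u p - complex_of_real zeta * u p) \<le> D / R * indicator (quasimode_box y0 R) p"
    for p
    unfolding u_def D_def by (rule norm_Hop_quasimode_minus_le_indicator[OF P R K V supp])
  have "cmod (Hop B w lam V u p) \<le> (D / R + cmod zeta) * indicator (quasimode_box y0 R) p" for p
    using norm_triangle_sub[of "Hop B w lam V u p" "complex_of_real zeta * u p"] hE[of p] hu[of p]
      mult_left_mono[OF hu[of p], of "cmod zeta"]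
    by (auto simp: norm_mult algebra_simps)
  with Hm show "Hop B w lam V u \<in> L2"
    unfolding box by (rule L2_if_bounded_on_box(1))
  from um hu show "u \<in> L2" unfolding box by (rule L2_if_bounded_on_box(1))
  have "(\<integral>p. (cmod (Hop B w lam V u p - complex_of_real zeta * u p))^2 \<partial>lborel)
      \<le> (D / R)^2 * measure lborel (quasimode_box y0 R)"
    using um Hm hE unfolding box by (intro L2_if_bounded_on_box(2)) auto
  also have "\<dots> = 4 * D^2"
    using R0 by (simp add: box measure_cbox_pair power2_eq_square)
  finally show "(\<integral>p. (cmod (Hop B w lam V u p - complex_of_real zeta * u p))^2 \<partial>lborel) \<le> 4 * D^2" .
  have "(exp (-4) * exp (-(nu/8)) * exp (-4))^2 * measure lborel (cbox (3*R/2, y0 - 1/2) (5*R/2, y0 + 1/2))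
      \<le> (\<integral>p. (cmod (u p))^2 \<partial>lborel)"
    using norm_quasimode_ge[of nu R _ _ y0 k] nu R
    by (intro integral_norm_square_ge_on_box \<open>u \<in> L2\<close>) (auto simp: u_def)
  then show "(exp (-4) * exp (-(nu/8)) * exp (-4))^2 * R \<le> (\<integral>p. (cmod (u p))^2 \<partial>lborel)"
    using R0 by (simp add: measure_cbox_pair)
qed

lemma quasimode_approximate_eigenfunction:
  fixes lam :: real
  assumes P: "landau_params w B nu k y0 zeta"
    and K: "\<And>t. \<bar>bump' t\<bar> \<le> K \<and> \<bar>bump'' t\<bar> \<le> K"
    and V: "\<forall>s. \<bar>V s\<bar> \<le> Vm" and supp: "\<forall>s. V s \<noteq> 0 \<longrightarrow> \<bar>s\<bar> \<le> s0" and Vc: "continuous_on UNIV V"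
    and e: "e > 0"
  shows "\<exists>u. test_fn u \<and> u \<in> L2 \<and> Hop B w lam V u \<in> L2 \<and> L2norm u > 0 \<and>
     L2norm (\<lambda>p. Hop B w lam V u p - complex_of_real zeta * u p) \<le> e * L2norm u"
proof -
  define D where "D = (2*nu + 6 + 2 * (\<bar>k + B*y0\<bar> + \<bar>B\<bar> * (1 + 2/nu))) * K + \<bar>lam\<bar> * s0^2 * Vm"
  define m where "m = exp (-4) * exp (-(nu/8)) * exp (-4::real)"
  define R where "R = max 1 (4 * D^2 / (e^2 * m^2))"
  define u where "u = quasimode k nu y0 R"
  have R: "1 \<le> R" unfolding R_def by simp
  have est: "u \<in> L2" "Hop B w lam V u \<in> L2"
    "(\<integral>p. (cmod (Hop B w lam V u p - complex_of_real zeta * u p))^2 \<partial>lborel) \<le> 4 * D^2"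
    "m^2 * R \<le> (\<integral>p. (cmod (u p))^2 \<partial>lborel)"
    unfolding u_def D_def m_def by (rule quasimode_L2_estimates[OF P R K V supp Vc])+
  have "0 < m^2" by (simp add: m_def)
  then have em: "0 < e^2 * m^2" using e by simp
  moreover have "4 * D^2 / (e^2 * m^2) \<le> R" by (simp add: R_def)
  ultimately have "4 * D^2 \<le> e^2 * (m^2 * R)"
    by (simp add: pos_divide_le_eq mult_ac)
  also have "\<dots> \<le> e^2 * (\<integral>p. (cmod (u p))^2 \<partial>lborel)"
    using est(4) by (intro mult_left_mono) auto
  finally have "sqrt (\<integral>p. (cmod (Hop B w lam V u p - complex_of_real zeta * u p))^2 \<partial>lborel)
      \<le> sqrt (e^2 * (\<integral>p. (cmod (u p))^2 \<partial>lborel))"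
    using est(3) by simp
  then have "L2norm (\<lambda>p. Hop B w lam V u p - complex_of_real zeta * u p) \<le> e * L2norm u"
    using e by (simp add: L2norm_def real_sqrt_mult)
  moreover have "0 < m^2 * R" using \<open>0 < m^2\<close> R by simp
  then have "0 < (\<integral>p. (cmod (u p))^2 \<partial>lborel)" using est(4) by linarith
  then have "L2norm u > 0" by (simp add: L2norm_def)
  moreover have "test_fn u" unfolding u_def using R by (intro test_fn_quasimode) simp
  ultimately show ?thesis using est(1,2) by blast
qed

lemma landau_params_exist:
  assumes w: "w > 0" and zeta: "sqrt (w^2 + B^2) \<le> zeta"
  shows "\<exists>nu k y0. landau_params w B nu k y0 zeta"
proof -
  define nu where "nu = sqrt (w^2 + B^2)"
  define k where "k = nu * sqrt (zeta - nu) / w"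
  have nu: "nu > 0" and nu2: "nu^2 = w^2 + B^2"
    unfolding nu_def using w by (auto intro: add_pos_nonneg)
  have "k^2 * w^2 = nu^2 * (zeta - nu)"
    unfolding k_def using w zeta by (simp add: nu_def power_divide power_mult_distrib)
  then have "zeta * nu^2 = nu^3 + k^2 * w^2"
    by (simp add: algebra_simps power3_eq_cube power2_eq_square)
  moreover have "(-(k*B) / nu^2) * nu^2 = -(k*B)" using nu by simp
  ultimately have "landau_params w B nu k (-(k*B) / nu^2) zeta"
    using nu nu2 by (simp add: landau_params_def)
  then show ?thesis by blast
qed

theorem mainTheorem10:
  fixes w B lam s0 :: real and V :: "real \<Rightarrow> real"
  assumes "w > 0" and "B > 0" and "lam \<le> 0"
    and "\<forall>s. V s \<ge> 0"
    and "\<forall>n x. (deriv ^^ n) V differentiable (at x)"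
    and "bounded (range (deriv V))"
    and "s0 > 0" and "\<forall>s. V s \<noteq> 0 \<longrightarrow> s \<in> {-s0..s0}"
  shows "complex_of_real ` {sqrt (w^2 + B^2)..} \<subseteq> ess_spectrum (closure_graph (Hop B w lam V))"
proof (rule ess_spectrum_if_ray_in_spectrum)
  fix zeta assume zeta: "sqrt (w^2 + B^2) \<le> zeta"
  have Vc: "isCont V s" for s
    using assms(5) differentiable_imp_continuous_within[of V] by (metis funpow_0)
  have supp: "\<forall>s. V s \<noteq> 0 \<longrightarrow> \<bar>s\<bar> \<le> s0" using assms(8) by auto
  obtain Vm where "\<forall>s. \<bar>V s\<bar> \<le> Vm"
    using bounded_if_continuous_vanishing_outside_interval[OF Vc, of s0] supp by fastforce
  moreover obtain K where "\<And>t. \<bar>bump' t\<bar> \<le> K \<and> \<bar>bump'' t\<bar> \<le> K"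
    using bump_derivatives_bounded by blast
  moreover obtain nu k y0 where "landau_params w B nu k y0 zeta"
    using landau_params_exist[OF assms(1) zeta] by blast
  ultimately have "\<not> in_resolvent (closure_graph (Hop B w lam V)) (complex_of_real zeta)"
    using supp Vc
    by (intro not_in_resolvent_if_approximate_eigenfunctions Hop_diff quasimode_approximate_eigenfunction)
       (auto intro: continuous_at_imp_continuous_on)
  then show "complex_of_real zeta \<in> op_spectrum (closure_graph (Hop B w lam V))"
    by (simp add: op_spectrum_def)
qed

end
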